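(* Let $\lambda>0$, $a\in C^1(\mathbb{R}^+)$ non-decreasing and globally Lipschitz with $0<m\le a\le M$, $f\in C^2(\mathbb{R})$ odd with $f(0)=0$, $f'(0)=1$, $sf''(s)<0$ for $s\ne0$, $\limsup_{|s|\to\infty}f(s)/s\le0$. Let $N\in\mathbb{N}$ with $a(0)N^2<\lambda<a(0)(N+1)^2$, let $\phi\in\{\phi_N^+,\phi_N^-\}$ (as in the context), and for $\tau\in[0,1]$ let $a_\tau(s)=a(\tau s+(1-\tau)\|\phi_x\|^2)$ and let $\{S_\tau(t):t\ge0\}$ be the semigroup on $H^1_0(0,\pi)$ generated by $$u_t=a_\tau(\|u_x\|^2)u_{xx}+\lambda f(u),\ x\in(0,\pi),\ t>0;\quad u(t,0)=u(t,\pi)=0;\quad u(0)=u_0\in H^1_0(0,\pi).$$ If $\tau_n\to\tau_0$ in $[0,1]$, $u_0^{(n)}\to u_0$ in $H^1_0(0,\pi)$ and $t_n\to t_0$ in $\mathbb{R}^+$, then $\|S_{\tau_n}(t_n)u_0^{(n)}-S_{\tau_0}(t_0)u_0\|_{H^1_0(0,\pi)}\to0$.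
   Context: $\|\cdot\|$ is the $L^2(0,\pi)$ norm. Background: for $a(0)N^2<\lambda\le a(0)(N+1)^2$ the problem $u_t=a(\|u_x\|^2)u_{xx}+\lambda f(u)$ with Dirichlet conditions on $(0,\pi)$ has equilibria $\{0\}\cup\{\phi_j^\pm\}_{j=1}^N$ with $\phi_j^+$ having $j+1$ zeros in $[0,\pi]$, $(\phi_j^+)_x(0)>0$, $\phi_j^-=-\phi_j^+$. *)

theory Defs
  imports "HOL-Analysis.Analysis" "HOL-Library.Liminf_Limsup"
begin

text \<open>The space H^1_0(0,pi): u is the integral of a square-integrable g,
  u(x) = int_0^x g on [0,pi], with u(pi) = 0 (hence also u(0) = 0).
  g is the weak derivative u_x.\<close>

definition h10_rep :: "(real \<Rightarrow> real) \<Rightarrow> (real \<Rightarrow> real) \<Rightarrow> bool" where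
  "h10_rep u g \<longleftrightarrow> g integrable_on {0..pi} \<and> (\<lambda>x. (g x)^2) integrable_on {0..pi} \<and>
     (\<forall>x\<in>{0..pi}. u x = integral {0..x} g) \<and> u pi = 0"

definition h10 :: "(real \<Rightarrow> real) \<Rightarrow> bool" where
  "h10 u \<longleftrightarrow> (\<exists>g. h10_rep u g)"

definition h10_deriv :: "(real \<Rightarrow> real) \<Rightarrow> real \<Rightarrow> real" where
  "h10_deriv u = (SOME g. h10_rep u g)"

definition h10_sq :: "(real \<Rightarrow> real) \<Rightarrow> real" where
  "h10_sq u = integral {0..pi} (\<lambda>x. (h10_deriv u x)^2)"

definition h10_dist :: "(real \<Rightarrow> real) \<Rightarrow> (real \<Rightarrow> real) \<Rightarrow> real" where
  "h10_dist u v = sqrt (integral {0..pi} (\<lambda>x. (h10_deriv u x - h10_deriv v x)^2))"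

definition is_solution ::
  "(real \<Rightarrow> real) \<Rightarrow> real \<Rightarrow> (real \<Rightarrow> real) \<Rightarrow> (real \<Rightarrow> real) \<Rightarrow> (real \<Rightarrow> real \<Rightarrow> real) \<Rightarrow> bool" where
  "is_solution A lam f u0 u \<longleftrightarrow>
     (\<forall>t\<ge>0. h10 (u t)) \<and>
     (\<forall>x\<in>{0..pi}. u 0 x = u0 x) \<and>
     (\<forall>t0\<ge>0. ((\<lambda>t. h10_dist (u t) (u t0)) \<longlongrightarrow> 0) (at t0 within {0..})) \<and>
     (\<exists>ut ux uxx.
        continuous_on ({0<..} \<times> {0..pi}) (\<lambda>(t,x). ut t x) \<and>
        continuous_on ({0<..} \<times> {0..pi}) (\<lambda>(t,x). ux t x) \<and>
        continuous_on ({0<..} \<times> {0..pi}) (\<lambda>(t,x). uxx t x) \<and>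
        (\<forall>t>0. \<forall>x\<in>{0..pi}.
            ((\<lambda>s. u s x) has_real_derivative ut t x) (at t) \<and>
            ((\<lambda>y. u t y) has_real_derivative ux t x) (at x within {0..pi}) \<and>
            ((\<lambda>y. ux t y) has_real_derivative uxx t x) (at x within {0..pi})) \<and>
        (\<forall>t>0. \<forall>x\<in>{0<..<pi}.
            ut t x = A (h10_sq (u t)) * uxx t x + lam * f (u t x)))"

definition is_equilibrium ::
  "(real \<Rightarrow> real) \<Rightarrow> real \<Rightarrow> (real \<Rightarrow> real) \<Rightarrow> (real \<Rightarrow> real) \<Rightarrow> bool" where
  "is_equilibrium A lam f phi \<longleftrightarrow> h10 phi \<and>
     (\<exists>phi' phi''. continuous_on {0..pi} phi'' \<and>
        (\<forall>x\<in>{0..pi}. (phi has_real_derivative phi' x) (at x within {0..pi}) \<and>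
                       (phi' has_real_derivative phi'' x) (at x within {0..pi}) \<and>
                       A (h10_sq phi) * phi'' x + lam * f (phi x) = 0))"

end

theory Submission
  imports Defs "HOL-Probability.Distribution_Functions"
begin

text \<open>
  Write U and V for the solutions with data (\<tau>_n, u0_n) and (\<tau>0, u0).  The hypotheses
  s f''(s) < 0 and f'(0) = 1 give f' \<le> 1, so the energy X = ||u_x||^2 of any solution satisfies
  X' \<le> -2m ||u_xx||^2 + 2 lam X: energies stay below a common bound R on [0, T], and the
  dissipation ||V_xx||^2 is controlled by -X_V'.  For W = ||U_x - V_x||^2, testing the difference
  of the two equations with (U - V)_xx and using Young's inequality, the bound |w|^2 \<le> pi ||w_x||^2,
  the Lipschitz continuity of a and a local Lipschitz bound for f gives
  W' \<le> C1 W + (C2 W + C3 |\<tau>_n - \<tau>0|^2) ||V_xx||^2.  A Gronwall argument with the weight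
  exp (\<mu> X_V) absorbs the last term and yields W(t) \<le> C (W(0) + |\<tau>_n - \<tau>0|^2) for t \<le> T,
  with C independent of n; the continuity of t \<mapsto> V(t) in H^1_0 handles t_n \<rightarrow> t0.
\<close>

section \<open>Square integrable functions\<close>

definition square_integrable_on :: "(real \<Rightarrow> real) \<Rightarrow> real set \<Rightarrow> bool"
    (infixr \<open>square'_integrable'_on\<close> 46) where
  "g square_integrable_on S \<longleftrightarrow> S \<in> sets lebesgue \<and>
     g \<in> borel_measurable (lebesgue_on S) \<and> (\<lambda>x. (g x)^2) integrable_on S"

definition L2_norm :: "real set \<Rightarrow> (real \<Rightarrow> real) \<Rightarrow> real" where
  "L2_norm S g = sqrt (integral S (\<lambda>x. (g x)^2))"

lemma integral_square_nonneg: "0 \<le> integral S (\<lambda>x. (g x)^2)" for g :: "real \<Rightarrow> real"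
  by (cases "(\<lambda>x. (g x)^2) integrable_on S") (auto intro: integral_nonneg simp: not_integrable_integral)

lemma square_integrable_on_imp_integrable_mult:
  assumes "g square_integrable_on S" "h square_integrable_on S"
  shows "(\<lambda>x. g x * h x) integrable_on S"
proof (rule measurable_bounded_by_integrable_imp_integrable_real)
  show "(\<lambda>x. g x * h x) \<in> borel_measurable (lebesgue_on S)"
    using assms unfolding square_integrable_on_def by (blast intro: borel_measurable_times)
  show "(\<lambda>x. ((g x)^2 + (h x)^2) / 2) integrable_on S"
    using assms unfolding square_integrable_on_def by (intro integrable_on_divide integrable_add) auto
  show "\<bar>g x * h x\<bar> \<le> ((g x)^2 + (h x)^2) / 2" for x
    using sum_squares_bound[of "\<bar>g x\<bar>" "\<bar>h x\<bar>"] by (simp add: abs_mult power2_eq_square)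
qed (use assms in \<open>auto simp: square_integrable_on_def\<close>)

lemma square_integrable_on_add:
  assumes "g square_integrable_on S" "h square_integrable_on S"
  shows "(\<lambda>x. g x + h x) square_integrable_on S"
proof -
  have "(\<lambda>x. (g x)^2 + (h x)^2 + 2 * (g x * h x)) integrable_on S"
    using assms square_integrable_on_imp_integrable_mult[OF assms]
    unfolding square_integrable_on_def by (intro integrable_add integrable_on_mult_right) auto
  then show ?thesis
    using assms unfolding square_integrable_on_def power2_sum
    by (auto simp: mult.assoc intro: borel_measurable_add)
qed

lemma square_integrable_on_cmult:
  "g square_integrable_on S \<Longrightarrow> (\<lambda>x. c * g x) square_integrable_on S"
  unfolding square_integrable_on_def power_mult_distrib
  by (auto intro: integrable_on_mult_right borel_measurable_times)

lemma square_integrable_on_diff: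
  "g square_integrable_on S \<Longrightarrow> h square_integrable_on S \<Longrightarrow> (\<lambda>x. g x - h x) square_integrable_on S"
  using square_integrable_on_add[of g S "\<lambda>x. (-1) * h x"] square_integrable_on_cmult[of h S "-1"]
  by simp

lemma continuous_on_imp_square_integrable_on:
  "continuous_on {a..b} g \<Longrightarrow> g square_integrable_on {a..b}"
  unfolding square_integrable_on_def
  by (auto intro!: integrable_continuous_real continuous_intros integrable_imp_measurable)

lemma square_integrable_on_imp_absolutely_integrable:
  assumes "g square_integrable_on {a..b}"
  shows "g absolutely_integrable_on {a..b}"
proof (rule measurable_bounded_by_integrable_imp_absolutely_integrable)
  show "(\<lambda>x. (1 + (g x)^2) / 2) integrable_on {a..b}"
    using assms unfolding square_integrable_on_def by (intro integrable_on_divide integrable_add) auto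
  show "norm (g x) \<le> (1 + (g x)^2) / 2" for x
    using sum_squares_bound[of "\<bar>g x\<bar>" 1] by (simp add: power2_eq_square)
qed (use assms in \<open>auto simp: square_integrable_on_def\<close>)

lemma nonneg_quadratic_imp_discriminant_le:
  fixes A B C :: real
  assumes "\<And>r. 0 \<le> A + 2 * r * B + r^2 * C"
  shows "B^2 \<le> A * C"
proof (cases "C = 0")
  case True
  have "B = 0"
  proof (rule ccontr)
    assume "B \<noteq> 0"
    have "0 \<le> A + 2 * (- (\<bar>A\<bar> + 1) / B) * B" using assms[of "- (\<bar>A\<bar> + 1) / B"] True by simp
    also have "\<dots> = A - 2 * (\<bar>A\<bar> + 1)" using \<open>B \<noteq> 0\<close> by (simp add: field_simps)
    finally show False by (cases "A \<ge> 0") auto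
  qed
  then show ?thesis using True by simp
next
  case False
  have "C \<ge> 0"
  proof (rule ccontr)
    assume "\<not> C \<ge> 0"
    define r where "r = sqrt ((\<bar>A\<bar> + 1) / (- C))"
    have "r^2 * C = - (\<bar>A\<bar> + 1)"
      using \<open>\<not> C \<ge> 0\<close> unfolding r_def by (simp add: field_simps)
    moreover have "0 \<le> (A + 2 * r * B + r^2 * C) + (A + 2 * (-r) * B + (-r)^2 * C)"
      using assms[of r] assms[of "-r"] by linarith
    ultimately show False by (simp add: algebra_simps)
  qed
  with False have "C > 0" by simp
  have "0 \<le> A + 2 * (-B/C) * B + (-B/C)^2 * C" by (rule assms)
  also have "\<dots> = A - B^2 / C" using \<open>C > 0\<close> by (simp add: field_simps power2_eq_square)
  finally show ?thesis using \<open>C > 0\<close> by (simp add: field_simps)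
qed

lemma L2_norm_nonneg: "L2_norm S g \<ge> 0"
  unfolding L2_norm_def using integral_square_nonneg by simp

lemma L2_norm_square: "(L2_norm S g)^2 = integral S (\<lambda>x. (g x)^2)"
  unfolding L2_norm_def using integral_square_nonneg by simp

lemma L2_norm_diff_commute: "L2_norm S (\<lambda>x. g x - h x) = L2_norm S (\<lambda>x. h x - g x)"
  unfolding L2_norm_def by (simp add: power2_commute)

lemma Cauchy_Schwarz_integral:
  assumes "g square_integrable_on S" "h square_integrable_on S"
  shows "\<bar>integral S (\<lambda>x. g x * h x)\<bar> \<le> L2_norm S g * L2_norm S h"
proof -
  have "(integral S (\<lambda>x. g x * h x))^2 \<le> integral S (\<lambda>x. (g x)^2) * integral S (\<lambda>x. (h x)^2)"
  proof (rule nonneg_quadratic_imp_discriminant_le)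
    fix r :: real
    have "0 \<le> integral S (\<lambda>x. (g x + r * h x)^2)"
      by (rule integral_square_nonneg)
    also have "\<dots> = integral S (\<lambda>x. (g x)^2 + 2 * r * (g x * h x) + r^2 * (h x)^2)"
      by (simp add: power2_eq_square algebra_simps)
    also have "\<dots> = integral S (\<lambda>x. (g x)^2) + 2 * r * integral S (\<lambda>x. g x * h x)
        + r^2 * integral S (\<lambda>x. (h x)^2)"
      using assms square_integrable_on_imp_integrable_mult[OF assms] unfolding square_integrable_on_def
      by (simp add: integral_add integrable_add integrable_on_mult_right)
    finally show "0 \<le> \<dots>" .
  qed
  then have "\<bar>integral S (\<lambda>x. g x * h x)\<bar>^2 \<le> (L2_norm S g * L2_norm S h)^2"
    by (simp add: L2_norm_square power_mult_distrib)
  then show ?thesis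
    by (rule power2_le_imp_le) (simp add: L2_norm_nonneg)
qed

lemma L2_norm_triangle:
  assumes "g square_integrable_on S" "h square_integrable_on S"
  shows "L2_norm S (\<lambda>x. g x + h x) \<le> L2_norm S g + L2_norm S h"
proof -
  have "(L2_norm S (\<lambda>x. g x + h x))^2
      = (L2_norm S g)^2 + 2 * integral S (\<lambda>x. g x * h x) + (L2_norm S h)^2"
    using assms square_integrable_on_imp_integrable_mult[OF assms] unfolding square_integrable_on_def
    by (simp add: L2_norm_square power2_sum integral_add integrable_add integrable_on_mult_right mult.assoc)
  also have "\<dots> \<le> (L2_norm S g + L2_norm S h)^2"
    using Cauchy_Schwarz_integral[OF assms] by (simp add: power2_sum)
  finally show ?thesis
    by (rule power2_le_imp_le) (simp add: L2_norm_nonneg)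
qed

lemma L2_norm_diff_triangle:
  assumes "g square_integrable_on S" "h square_integrable_on S" "k square_integrable_on S"
  shows "L2_norm S (\<lambda>x. g x - k x) \<le> L2_norm S (\<lambda>x. g x - h x) + L2_norm S (\<lambda>x. h x - k x)"
  using L2_norm_triangle[OF square_integrable_on_diff[OF assms(1,2)] square_integrable_on_diff[OF assms(2,3)]]
  by simp

lemma L2_norm_square_diff_le:
  assumes "g square_integrable_on S" "h square_integrable_on S"
  shows "((L2_norm S g)^2 - (L2_norm S h)^2)^2
           \<le> 2 * ((L2_norm S g)^2 + (L2_norm S h)^2) * (L2_norm S (\<lambda>x. g x - h x))^2"
proof -
  have "(L2_norm S g)^2 - (L2_norm S h)^2 = integral S (\<lambda>x. (g x - h x) * (g x + h x))"
    using assms unfolding L2_norm_square square_integrable_on_def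
    by (subst integral_diff[symmetric]) (auto simp: power2_eq_square algebra_simps)
  also have "\<bar>\<dots>\<bar> \<le> L2_norm S (\<lambda>x. g x - h x) * (L2_norm S g + L2_norm S h)"
    using Cauchy_Schwarz_integral[OF square_integrable_on_diff[OF assms] square_integrable_on_add[OF assms]]
      L2_norm_triangle[OF assms] L2_norm_nonneg[of S "\<lambda>x. g x - h x"]
    by (meson mult_left_mono order_trans)
  finally have "((L2_norm S g)^2 - (L2_norm S h)^2)^2
      \<le> (L2_norm S (\<lambda>x. g x - h x))^2 * (L2_norm S g + L2_norm S h)^2"
    by (metis abs_ge_zero power2_abs power_mono power_mult_distrib)
  also have "\<dots> \<le> (L2_norm S (\<lambda>x. g x - h x))^2 * (2 * ((L2_norm S g)^2 + (L2_norm S h)^2))"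
    using sum_squares_bound[of "L2_norm S g" "L2_norm S h"]
    by (intro mult_left_mono) (auto simp: power2_sum)
  finally show ?thesis by (simp add: mult_ac)
qed

section \<open>Functions with vanishing indefinite integral\<close>

lemma nn_integral_pos_eq_neg_if_integral_zero:
  fixes F :: "'a \<Rightarrow> real"
  assumes F: "integrable M F" and "integral\<^sup>L M F = 0"
  shows "(\<integral>\<^sup>+y. ennreal (F y) \<partial>M) = (\<integral>\<^sup>+y. ennreal (- F y) \<partial>M)"
proof -
  have fin: "(\<integral>\<^sup>+y. ennreal (F y) \<partial>M) \<noteq> \<infinity>" "(\<integral>\<^sup>+y. ennreal (- F y) \<partial>M) \<noteq> \<infinity>"
    using F unfolding real_integrable_def by blast+
  have "enn2real (\<integral>\<^sup>+y. ennreal (F y) \<partial>M) = enn2real (\<integral>\<^sup>+y. ennreal (- F y) \<partial>M)"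
    using assms(2) real_lebesgue_integral_def[OF F] by simp
  from arg_cong[where f=ennreal, OF this] fin show ?thesis
    by (simp add: ennreal_enn2real_if)
qed

lemma finite_borel_measure_density:
  fixes H :: "real \<Rightarrow> real"
  assumes Hm: "H \<in> borel_measurable lborel" and fin: "(\<integral>\<^sup>+y. ennreal (H y) \<partial>lborel) \<noteq> \<infinity>"
  shows "finite_borel_measure (density lborel (\<lambda>y. ennreal (H y)))"
proof (rule finite_borel_measure.intro)
  have "emeasure (density lborel (\<lambda>y. ennreal (H y))) UNIV
      = (\<integral>\<^sup>+y. ennreal (H y) * indicator UNIV y \<partial>lborel)"
    by (rule emeasure_density) (use Hm in auto)
  then show "finite_measure (density lborel (\<lambda>y. ennreal (H y)))"
    using fin by (intro finite_measureI) simp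
  show "finite_borel_measure_axioms (density lborel (\<lambda>y. ennreal (H y)))"
    by unfold_locales simp
qed

text \<open>The positive and the negative part of \<open>H\<close> are densities of finite Borel measures with the
  same distribution function.\<close>

lemma AE_zero_if_integral_atMost_zero:
  fixes H :: "real \<Rightarrow> real"
  assumes H: "integrable lborel H"
    and zero: "\<And>x. (LINT y|lborel. indicator {..x} y * H y) = 0"
  shows "AE y in lborel. H y = 0"
proof -
  have Hm: "H \<in> borel_measurable lborel" using borel_measurable_integrable[OF H] .
  define M1 where "M1 = density lborel (\<lambda>y. ennreal (H y))"
  define M2 where "M2 = density lborel (\<lambda>y. ennreal (- H y))"
  have fin1: "(\<integral>\<^sup>+y. ennreal (H y) \<partial>lborel) \<noteq> \<infinity>"
    and fin2: "(\<integral>\<^sup>+y. ennreal (- H y) \<partial>lborel) \<noteq> \<infinity>"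
    using H unfolding real_integrable_def by blast+
  have "emeasure M1 {..x} = emeasure M2 {..x}" for x :: real
  proof -
    define F where "F y = indicator {..x} y * H y" for y
    have F: "integrable lborel F"
      unfolding F_def using integrable_mult_indicator[of "{..x}" lborel H] H by simp
    have "emeasure M1 {..x} = (\<integral>\<^sup>+y. ennreal (H y) * indicator {..x} y \<partial>lborel)"
      unfolding M1_def by (rule emeasure_density) (use Hm in auto)
    also have "\<dots> = (\<integral>\<^sup>+y. ennreal (F y) \<partial>lborel)"
      unfolding F_def by (rule nn_integral_cong) (auto simp: indicator_def)
    also have "\<dots> = (\<integral>\<^sup>+y. ennreal (- F y) \<partial>lborel)"
      using F zero[of x] unfolding F_def by (rule nn_integral_pos_eq_neg_if_integral_zero)
    also have "\<dots> = (\<integral>\<^sup>+y. ennreal (- H y) * indicator {..x} y \<partial>lborel)"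
      unfolding F_def by (rule nn_integral_cong) (auto simp: indicator_def)
    also have "\<dots> = emeasure M2 {..x}"
      unfolding M2_def by (rule emeasure_density[symmetric]) (use Hm in auto)
    finally show ?thesis .
  qed
  then have "cdf M1 = cdf M2"
    unfolding cdf_def measure_def by auto
  moreover have "finite_borel_measure M1" "finite_borel_measure M2"
    unfolding M1_def M2_def
    by (rule finite_borel_measure_density[OF Hm fin1],
        rule finite_borel_measure_density[OF borel_measurable_uminus[OF Hm] fin2])
  ultimately have "M1 = M2"
    by (intro cdf_unique'[of M1 M2])
  then have "AE y in lborel. ennreal (H y) = ennreal (- H y)"
    unfolding M1_def M2_def by (subst (asm) finite_density_unique) (use Hm fin1 in auto)
  then show ?thesis
    by (rule eventually_mono) (smt (verit) ennreal_eq_0_iff ennreal_neg)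
qed

lemma AE_zero_if_lebesgue_integral_atMost_zero:
  fixes H :: "real \<Rightarrow> real"
  assumes H: "integrable lebesgue H"
    and zero: "\<And>x. (LINT y|lebesgue. indicator {..x} y * H y) = 0"
  shows "AE y in lebesgue. H y = 0"
proof -
  obtain H' where H'm: "H' \<in> borel_measurable lborel" and HH'_borel: "AE x in lborel. H x = H' x"
    using completion_ex_borel_measurable_real[OF borel_measurable_integrable[OF H]] by blast
  have HH': "AE x in lebesgue. H x = H' x" by (rule AE_completion[OF HH'_borel])
  have H': "integrable lborel H'"
    using integrable_cong_AE_imp[OF H measurable_completion[OF H'm] HH'] H'm
    by (simp add: integrable_completion)
  have "(LINT y|lborel. indicator {..x} y * H' y) = 0" for x :: real
  proof -
    have "(LINT y|lborel. indicator {..x} y * H' y) = (LINT y|lebesgue. indicator {..x} y * H' y)"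
      by (rule integral_completion[symmetric]) (use H'm in auto)
    also have "\<dots> = (LINT y|lebesgue. indicator {..x} y * H y)"
      using HH' borel_measurable_integrable[OF H] measurable_completion[OF H'm]
      by (intro integral_cong_AE borel_measurable_times borel_measurable_indicator) auto
    finally show ?thesis using zero by simp
  qed
  then have "AE y in lborel. H' y = 0"
    by (rule AE_zero_if_integral_atMost_zero[OF H'])
  then have "AE y in lborel. H y = 0"
    using HH'_borel by eventually_elim simp
  then show ?thesis
    by (rule AE_completion)
qed

lemma indefinite_integral_zero_imp_AE_zero:
  fixes h :: "real \<Rightarrow> real"
  assumes h: "h absolutely_integrable_on {a..b}"
    and zero: "\<And>x. x \<in> {a..b} \<Longrightarrow> integral {a..x} h = 0"
  obtains N where "negligible N" "\<And>x. x \<in> {a..b} - N \<Longrightarrow> h x = 0"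
proof -
  define H where "H x = indicator {a..b} x * h x" for x
  have H: "integrable lebesgue H"
    using h unfolding set_integrable_def H_def by simp
  have "(LINT y|lebesgue. indicator {..x} y * H y) = 0" for x
  proof -
    have "(LINT y|lebesgue. indicator {..x} y * H y) = (LINT y|lebesgue. indicator ({a..b} \<inter> {..x}) y *\<^sub>R h y)"
      unfolding H_def by (rule Bochner_Integration.integral_cong) (auto simp: indicator_def)
    also have "\<dots> = integral ({a..b} \<inter> {..x}) h"
      using set_lebesgue_integral_eq_integral(2)[OF set_integrable_subset[OF h]]
      unfolding set_lebesgue_integral_def by auto
    also have "\<dots> = 0"
    proof (cases "x < a")
      case False
      then have "{a..b} \<inter> {..x} = {a..min x b}" by auto
      then show ?thesis using zero[of "min x b"] False by (cases "a \<le> b") auto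
    qed simp
    finally show ?thesis .
  qed
  then have "AE y in lebesgue. H y = 0"
    by (rule AE_zero_if_lebesgue_integral_atMost_zero[OF H])
  then obtain N where N: "{y \<in> space lebesgue. H y \<noteq> 0} \<subseteq> N" "N \<in> null_sets lebesgue"
    by (metis AE_E null_setsI)
  show ?thesis
  proof
    show "negligible N" using N(2) by (simp add: negligible_iff_null_sets)
    show "h x = 0" if "x \<in> {a..b} - N" for x
      using N(1) that unfolding H_def by (auto simp: indicator_def)
  qed
qed

section \<open>The space H^1_0(0, pi)\<close>

lemma h10_rep_imp_square_integrable: "h10_rep u g \<Longrightarrow> g square_integrable_on {0..pi}"
  unfolding h10_rep_def square_integrable_on_def by (auto intro: integrable_imp_measurable)

lemma h10_rep_h10_deriv:
  assumes "h10 u"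
  shows "h10_rep u (h10_deriv u)"
  using assms unfolding h10_def h10_deriv_def by (rule someI_ex)

lemma h10_deriv_square_integrable: "h10 u \<Longrightarrow> h10_deriv u square_integrable_on {0..pi}"
  by (rule h10_rep_imp_square_integrable[OF h10_rep_h10_deriv])

lemma h10_rep_unique_AE:
  assumes "h10_rep u g" "h10_rep u g'"
  obtains N where "negligible N" "\<And>x. x \<in> {0..pi} - N \<Longrightarrow> g x = g' x"
proof -
  have "(\<lambda>x. g x - g' x) absolutely_integrable_on {0..pi}"
    using assms by (intro square_integrable_on_imp_absolutely_integrable square_integrable_on_diff
        h10_rep_imp_square_integrable)
  moreover have "integral {0..x} (\<lambda>x. g x - g' x) = 0" if "x \<in> {0..pi}" for x
    using assms that unfolding h10_rep_def
    by (subst integral_diff) (auto intro: integrable_subinterval_real)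
  ultimately show ?thesis
    using that by (elim indefinite_integral_zero_imp_AE_zero) auto
qed

lemma h10_sq_eq:
  assumes "h10_rep u g"
  shows "h10_sq u = integral {0..pi} (\<lambda>x. (g x)^2)"
proof -
  obtain N where "negligible N" "\<And>x. x \<in> {0..pi} - N \<Longrightarrow> h10_deriv u x = g x"
    using h10_rep_unique_AE[OF h10_rep_h10_deriv assms] assms unfolding h10_def by blast
  then show ?thesis
    unfolding h10_sq_def by (intro integral_spike[of N]) auto
qed

lemma h10_dist_eq:
  assumes "h10_rep u g" "h10_rep v k"
  shows "h10_dist u v = L2_norm {0..pi} (\<lambda>x. g x - k x)"
proof -
  obtain N where "negligible N" "\<And>x. x \<in> {0..pi} - N \<Longrightarrow> h10_deriv u x = g x"
    using h10_rep_unique_AE[OF h10_rep_h10_deriv assms(1)] assms(1) unfolding h10_def by blast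
  moreover obtain N' where "negligible N'" "\<And>x. x \<in> {0..pi} - N' \<Longrightarrow> h10_deriv v x = k x"
    using h10_rep_unique_AE[OF h10_rep_h10_deriv assms(2)] assms(2) unfolding h10_def by blast
  ultimately show ?thesis
    unfolding h10_dist_def L2_norm_def by (intro arg_cong[where f=sqrt] integral_spike[of "N \<union> N'"]) auto
qed

lemma h10_deriv_cong: "(\<And>x. x \<in> {0..pi} \<Longrightarrow> u x = v x) \<Longrightarrow> h10_deriv u = h10_deriv v"
  unfolding h10_deriv_def h10_rep_def by (intro arg_cong[where f=Eps] ext) auto

lemma h10_sq_nonneg: "h10_sq u \<ge> 0"
  unfolding h10_sq_def by (rule integral_square_nonneg)

lemma sqrt_h10_sq: "sqrt (h10_sq u) = L2_norm {0..pi} (h10_deriv u)"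
  unfolding h10_sq_def L2_norm_def ..

lemma h10_dist_L2_norm: "h10_dist u v = L2_norm {0..pi} (\<lambda>x. h10_deriv u x - h10_deriv v x)"
  unfolding h10_dist_def L2_norm_def ..

lemma h10_dist_nonneg: "h10_dist u v \<ge> 0"
  unfolding h10_dist_L2_norm by (rule L2_norm_nonneg)

lemma h10_dist_commute: "h10_dist u v = h10_dist v u"
  unfolding h10_dist_L2_norm by (rule L2_norm_diff_commute)

lemma h10_dist_self: "h10_dist u u = 0"
  unfolding h10_dist_def by simp

lemma h10_dist_triangle:
  assumes "h10 u" "h10 v" "h10 w"
  shows "h10_dist u w \<le> h10_dist u v + h10_dist v w"
  unfolding h10_dist_L2_norm
  using assms by (intro L2_norm_diff_triangle h10_deriv_square_integrable)

lemma sqrt_h10_sq_le: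
  assumes "h10 u" "h10 v"
  shows "sqrt (h10_sq u) \<le> sqrt (h10_sq v) + h10_dist u v"
proof -
  have "L2_norm {0..pi} (\<lambda>x. h10_deriv u x - 0) \<le> h10_dist u v + L2_norm {0..pi} (\<lambda>x. h10_deriv v x - 0)"
    unfolding h10_dist_L2_norm
    using assms continuous_on_imp_square_integrable_on[of 0 pi "\<lambda>x. 0"]
    by (intro L2_norm_diff_triangle h10_deriv_square_integrable) auto
  then show ?thesis unfolding sqrt_h10_sq by simp
qed

lemma h10_rep_of_C1:
  assumes deriv: "\<And>x. x \<in> {0..pi} \<Longrightarrow> (u has_real_derivative u' x) (at x within {0..pi})"
    and cont: "continuous_on {0..pi} u'" and "u 0 = 0" "u pi = 0"
  shows "h10_rep u u'"
  unfolding h10_rep_def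
proof (intro conjI ballI)
  fix x assume x: "x \<in> {0..pi}"
  have "(u' has_integral (u x - u 0)) {0..x}"
  proof (rule fundamental_theorem_of_calculus)
    show "(u has_vector_derivative u' y) (at y within {0..x})" if "y \<in> {0..x}" for y
      using deriv[of y] that x
      by (auto simp: has_real_derivative_iff_has_vector_derivative[symmetric] intro: DERIV_subset)
  qed (use x in auto)
  then show "u x = integral {0..x} u'" using \<open>u 0 = 0\<close> by (simp add: integral_unique)
qed (use assms in \<open>auto intro!: integrable_continuous_real continuous_intros\<close>)

lemma h10_rep_square_le:
  assumes "h10_rep u g" "x \<in> {0..pi}"
  shows "(u x)^2 \<le> pi * integral {0..pi} (\<lambda>y. (g y)^2)"
proof -
  define ind where "ind y = (if y \<in> {0..x} then 1 else (0::real))" for y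
  have ind2: "(\<lambda>y. (ind y)^2) = ind" unfolding ind_def by auto
  have sub: "{0..x} \<inter> {0..pi} = {0..x}" using assms(2) by auto
  have int_ind: "(ind has_integral x) {0..pi}"
    unfolding ind_def has_integral_restrict_Int sub using has_integral_const_real[of "1::real" 0 x] assms(2) by simp
  have ind: "ind square_integrable_on {0..pi}"
    using int_ind unfolding square_integrable_on_def ind2 by (auto intro: integrable_imp_measurable)
  have g: "g square_integrable_on {0..pi}"
    using assms(1) by (rule h10_rep_imp_square_integrable)
  have "u x = integral {0..x} g" using assms unfolding h10_rep_def by auto
  also have "\<dots> = integral {0..pi} (\<lambda>y. if y \<in> {0..x} then g y else 0)"
    using integral_restrict_Int[of "{0..pi}" "{0..x}" g] unfolding sub by simp
  also have "(\<lambda>y. if y \<in> {0..x} then g y else 0) = (\<lambda>y. ind y * g y)"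
    by (auto simp: ind_def)
  finally have "\<bar>u x\<bar> \<le> L2_norm {0..pi} ind * L2_norm {0..pi} g"
    using Cauchy_Schwarz_integral[OF ind g] by simp
  then have "(u x)^2 \<le> (L2_norm {0..pi} ind)^2 * (L2_norm {0..pi} g)^2"
    by (metis abs_ge_zero power2_abs power_mono power_mult_distrib)
  also have "\<dots> \<le> pi * integral {0..pi} (\<lambda>y. (g y)^2)"
    using int_ind assms(2) integral_square_nonneg[of "{0..pi}" g]
    unfolding L2_norm_square ind2 by (auto simp: integral_unique intro: mult_right_mono)
  finally show ?thesis .
qed

lemma h10_rep_diff:
  assumes "h10_rep u g" "h10_rep v k"
  shows "h10_rep (\<lambda>x. u x - v x) (\<lambda>x. g x - k x)"
proof -
  have "(\<lambda>x. g x - k x) square_integrable_on {0..pi}"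
    using assms by (intro square_integrable_on_diff h10_rep_imp_square_integrable)
  then show ?thesis
    using assms unfolding h10_rep_def square_integrable_on_def
    by (auto intro!: integral_diff[symmetric] integrable_diff intro: integrable_subinterval_real)
qed

lemma h10_sq_le_dist:
  assumes "h10 u" "h10 v"
  shows "h10_sq u \<le> (sqrt (h10_sq v) + h10_dist u v)^2"
proof -
  have "sqrt (h10_sq u) \<le> sqrt (h10_sq v) + h10_dist u v"
    using sqrt_h10_sq_le[OF assms] .
  from power_mono[OF this real_sqrt_ge_zero[OF h10_sq_nonneg], of 2] show ?thesis
    by (simp add: h10_sq_nonneg)
qed

section \<open>Calculus\<close>

lemma integration_by_parts_vanishing_boundary:
  fixes a b :: real
  assumes "a \<le> b"
    and dF: "\<And>x. x \<in> {a..b} \<Longrightarrow> (F has_real_derivative f x) (at x within {a..b})"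
    and dG: "\<And>x. x \<in> {a..b} \<Longrightarrow> (G has_real_derivative g x) (at x within {a..b})"
    and "continuous_on {a..b} f" "continuous_on {a..b} g"
    and "F a * G a = 0" "F b * G b = 0"
  shows "integral {a..b} (\<lambda>x. f x * G x) = - integral {a..b} (\<lambda>x. F x * g x)"
proof -
  have "continuous_on {a..b} F" "continuous_on {a..b} G"
    using DERIV_continuous_on dF dG by blast+
  then have int: "(\<lambda>x. f x * G x) integrable_on {a..b}" "(\<lambda>x. F x * g x) integrable_on {a..b}"
    using assms by (auto intro!: integrable_continuous_real continuous_intros)
  have "((\<lambda>x. f x * G x + F x * g x) has_integral (F b * G b - F a * G a)) {a..b}"
  proof (rule fundamental_theorem_of_calculus[OF \<open>a \<le> b\<close>])
    fix x assume "x \<in> {a..b}"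
    then show "((\<lambda>x. F x * G x) has_vector_derivative (f x * G x + F x * g x)) (at x within {a..b})"
      using DERIV_mult[OF dF dG] by (simp add: has_real_derivative_iff_has_vector_derivative mult.commute)
  qed
  then show ?thesis
    using assms integral_add[OF int] by (simp add: integral_unique eq_neg_iff_add_eq_0)
qed

lemma integral_mono_interior:
  fixes f g :: "real \<Rightarrow> real"
  assumes "f integrable_on {a..b}" "g integrable_on {a..b}"
    and "\<And>x. x \<in> {a<..<b} \<Longrightarrow> f x \<le> g x"
  shows "integral {a..b} f \<le> integral {a..b} g"
proof -
  define f' where "f' x = (if x \<in> {a, b} then g x else f x)" for x
  have "negligible {a, b}" by simp
  then have "integral {a..b} f = integral {a..b} f'" "f' integrable_on {a..b}"
    using assms(1) unfolding f'_def
    by (auto intro!: integral_spike[of "{a, b}"] integrable_spike[of f _ "{a, b}"] split: if_splits)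
  then show ?thesis
    using assms(2,3) by (auto simp: f'_def intro: integral_le)
qed

lemma uniform_limit_at_if_continuous_on_Times:
  fixes h :: "real \<Rightarrow> 'a::metric_space \<Rightarrow> real"
  assumes cont: "continuous_on ({0<..} \<times> K) (\<lambda>(s, x). h s x)" and "compact K" "t > 0"
  shows "uniform_limit K h (h t) (at t)"
proof (rule uniform_limitI)
  fix e :: real assume "e > 0"
  have "uniformly_continuous_on ({t/2..2*t} \<times> K) (\<lambda>(s, x). h s x)"
    using \<open>t > 0\<close> \<open>compact K\<close>
    by (intro compact_uniformly_continuous continuous_on_subset[OF cont] compact_Times) auto
  then obtain d where "d > 0" and d: "\<And>p p'. p \<in> {t/2..2*t} \<times> K \<Longrightarrow> p' \<in> {t/2..2*t} \<times> K \<Longrightarrow>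
      dist p' p < d \<Longrightarrow> dist ((\<lambda>(s, x). h s x) p') ((\<lambda>(s, x). h s x) p) < e"
    using \<open>e > 0\<close> unfolding uniformly_continuous_on_def by metis
  have "\<forall>\<^sub>F s in at t. s \<in> ball t (min d (t/2))"
    using \<open>d > 0\<close> \<open>t > 0\<close> by (intro eventually_at_in_open') auto
  then show "\<forall>\<^sub>F s in at t. \<forall>x\<in>K. dist (h s x) (h t x) < e"
  proof eventually_elim
    case (elim s)
    then have "dist s t < d" "\<bar>s - t\<bar> < t/2" by (auto simp: dist_real_def abs_minus_commute)
    then have "s \<in> {t/2..2*t}" "dist (s, x) (t, x) < d" for x
      using abs_less_iff[of "s - t" "t/2"] by (auto simp: dist_Pair_Pair)
    moreover have "t \<in> {t/2..2*t}" using \<open>t > 0\<close> by simp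
    ultimately show ?case
      using d[of "(t, _)" "(s, _)"] by (auto simp: dist_real_def)
  qed
qed


lemma MVT_between:
  fixes f f' :: "real \<Rightarrow> real"
  assumes "s \<noteq> t" and deriv: "\<And>z. min s t \<le> z \<Longrightarrow> z \<le> max s t \<Longrightarrow> (f has_real_derivative f' z) (at z)"
  obtains z where "min s t < z" "z < max s t" "f s - f t = (s - t) * f' z"
proof (cases "s < t")
  case True
  with MVT2[of s t f f'] deriv obtain z where "s < z" "z < t" "f t - f s = (t - s) * f' z"
    by auto
  with True show ?thesis by (intro that[of z]) (auto simp: algebra_simps)
next
  case False
  with \<open>s \<noteq> t\<close> MVT2[of t s f f'] deriv obtain z where "t < z" "z < s" "f s - f t = (s - t) * f' z"
    by auto
  with False show ?thesis by (intro that[of z]) auto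
qed

lemma uniform_limit_difference_quotient:
  fixes w wt :: "real \<Rightarrow> real \<Rightarrow> real"
  assumes deriv: "\<And>s x. s > 0 \<Longrightarrow> x \<in> K \<Longrightarrow> ((\<lambda>s. w s x) has_real_derivative wt s x) (at s)"
    and cont: "continuous_on ({0<..} \<times> K) (\<lambda>(s, x). wt s x)" and "compact K" "t > 0"
  shows "uniform_limit K (\<lambda>s x. (w s x - w t x) / (s - t)) (wt t) (at t)"
proof (rule uniform_limitI)
  fix e :: real assume "e > 0"
  with uniform_limit_at_if_continuous_on_Times[OF cont \<open>compact K\<close> \<open>t > 0\<close>]
  have "\<forall>\<^sub>F s in at t. \<forall>x\<in>K. dist (wt s x) (wt t x) < e"
    by (rule uniform_limitD)
  then obtain d where "d > 0"
    and d: "\<And>s x. s \<noteq> t \<Longrightarrow> dist s t < d \<Longrightarrow> x \<in> K \<Longrightarrow> dist (wt s x) (wt t x) < e"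
    unfolding eventually_at by blast
  show "\<forall>\<^sub>F s in at t. \<forall>x\<in>K. dist ((w s x - w t x) / (s - t)) (wt t x) < e"
    unfolding eventually_at
  proof (intro exI[of _ "min d t"] conjI allI impI ballI)
    fix s x assume s: "s \<noteq> t \<and> dist s t < min d t" and "x \<in> K"
    then have pos: "min s t > 0"
      by (auto simp: dist_real_def abs_less_iff)
    have close: "\<bar>z - t\<bar> < d" if "min s t < z" "z < max s t" for z
      using s that by (auto simp: dist_real_def abs_less_iff)
    obtain z where z: "min s t < z" "z < max s t" "w s x - w t x = (s - t) * wt z x"
    proof (rule MVT_between[of s t "\<lambda>s. w s x" "\<lambda>s. wt s x"])
      show "((\<lambda>s. w s x) has_real_derivative wt z x) (at z)" if "min s t \<le> z" for z
        using deriv[OF _ \<open>x \<in> K\<close>, of z] pos that by linarith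
    qed (use s in auto)
    with close[OF z(1,2)] d[of z x] \<open>x \<in> K\<close> s show "dist ((w s x - w t x) / (s - t)) (wt t x) < e"
      by (auto simp: dist_real_def)
  qed (use \<open>d > 0\<close> \<open>t > 0\<close> in simp)
qed


locale regular_evolution =
  fixes a b :: real and w wt wx wxx :: "real \<Rightarrow> real \<Rightarrow> real"
  assumes interval: "a \<le> b"
    and deriv_t: "\<And>t x. t > 0 \<Longrightarrow> x \<in> {a..b} \<Longrightarrow> ((\<lambda>s. w s x) has_real_derivative wt t x) (at t)"
    and deriv_x: "\<And>t x. t > 0 \<Longrightarrow> x \<in> {a..b} \<Longrightarrow> (w t has_real_derivative wx t x) (at x within {a..b})"
    and deriv_xx: "\<And>t x. t > 0 \<Longrightarrow> x \<in> {a..b} \<Longrightarrow> (wx t has_real_derivative wxx t x) (at x within {a..b})"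
    and continuous_t: "continuous_on ({0<..} \<times> {a..b}) (\<lambda>(t, x). wt t x)"
    and continuous_xx: "continuous_on ({0<..} \<times> {a..b}) (\<lambda>(t, x). wxx t x)"
begin

lemma continuous_on_slice:
  assumes "continuous_on ({0<..} \<times> {a..b}) (\<lambda>(t, x). h t x)" "t > 0"
  shows "continuous_on {a..b} (h t)"
proof -
  have "continuous_on {a..b} (\<lambda>x. (\<lambda>(t, x). h t x) (t, x))"
    by (rule continuous_on_compose2[OF assms(1)]) (use assms(2) in \<open>auto intro!: continuous_intros\<close>)
  then show ?thesis by simp
qed

lemma continuous_w: "t > 0 \<Longrightarrow> continuous_on {a..b} (w t)"
  using DERIV_continuous_on deriv_x by blast

lemma continuous_wx: "t > 0 \<Longrightarrow> continuous_on {a..b} (wx t)"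
  using DERIV_continuous_on deriv_xx by blast

lemma continuous_wxx: "t > 0 \<Longrightarrow> continuous_on {a..b} (wxx t)"
  by (rule continuous_on_slice[OF continuous_xx])

lemma continuous_wt: "t > 0 \<Longrightarrow> continuous_on {a..b} (wt t)"
  by (rule continuous_on_slice[OF continuous_t])

lemma energy_diff:
  assumes "s > 0" "t > 0" and boundary: "\<And>s. s > 0 \<Longrightarrow> w s a = 0 \<and> w s b = 0"
  shows "integral {a..b} (\<lambda>x. (wx s x)^2) - integral {a..b} (\<lambda>x. (wx t x)^2)
           = - integral {a..b} (\<lambda>x. (w s x - w t x) * (wxx s x + wxx t x))"
proof -
  have "integral {a..b} (\<lambda>x. (wx s x)^2) - integral {a..b} (\<lambda>x. (wx t x)^2)
      = integral {a..b} (\<lambda>x. (wx s x - wx t x) * (wx s x + wx t x))"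
    using assms(1,2)
    by (subst integral_diff[symmetric])
       (auto intro!: integrable_continuous_real continuous_intros continuous_wx
             intro: integral_cong simp: power2_eq_square algebra_simps)
  also have "\<dots> = - integral {a..b} (\<lambda>x. (w s x - w t x) * (wxx s x + wxx t x))"
    using assms interval
    by (intro integration_by_parts_vanishing_boundary)
       (auto intro!: DERIV_diff DERIV_add deriv_x deriv_xx continuous_intros continuous_wx continuous_wxx)
  finally show ?thesis .
qed

lemma uniform_limit_energy_quotient:
  assumes "t > 0"
  shows "uniform_limit {a..b}
           (\<lambda>s x. if s > 0 then (w s x - w t x) / (s - t) * (wxx s x + wxx t x) else 0)
           (\<lambda>x. 2 * (wt t x * wxx t x)) (at t)"
proof -
  have bounded: "bounded (h ` {a..b})" if "continuous_on {a..b} h" for h :: "real \<Rightarrow> real"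
    using compact_imp_bounded[OF compact_continuous_image[OF that]] by simp
  have "uniform_limit {a..b} (\<lambda>s x. (w s x - w t x) / (s - t) * (wxx s x + wxx t x))
      (\<lambda>x. wt t x * (wxx t x + wxx t x)) (at t)"
    using assms
    by (intro uniform_lim_mult uniform_limit_difference_quotient uniform_limit_add uniform_limit_const
        uniform_limit_at_if_continuous_on_Times continuous_xx continuous_t deriv_t bounded
        continuous_intros continuous_wt continuous_wxx) auto
  then show ?thesis
  proof (rule iffD1[OF uniform_limit_cong, rotated 2])
    show "\<forall>\<^sub>F s in at t. \<forall>x\<in>{a..b}. (w s x - w t x) / (s - t) * (wxx s x + wxx t x)
        = (if s > 0 then (w s x - w t x) / (s - t) * (wxx s x + wxx t x) else 0)"
      using eventually_at_in_open'[of "{0<..}" t] assms by (auto elim!: eventually_mono)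
  qed simp
qed

text \<open>Integration by parts turns \<open>E s - E t\<close> into \<open>-\<integral> (w s - w t) (wxx s + wxx t)\<close>, whose difference
  quotient converges uniformly; no time derivative of \<open>wx\<close> is needed.\<close>

lemma has_real_derivative_energy:
  assumes "t > 0" and boundary: "\<And>s. s > 0 \<Longrightarrow> w s a = 0 \<and> w s b = 0"
  shows "((\<lambda>s. integral {a..b} (\<lambda>x. (wx s x)^2)) has_real_derivative
           -2 * integral {a..b} (\<lambda>x. wt t x * wxx t x)) (at t)"
proof -
  define E where "E s = integral {a..b} (\<lambda>x. (wx s x)^2)" for s
  define q where "q s x = (if s > 0 then (w s x - w t x) / (s - t) * (wxx s x + wxx t x) else 0)" for s x
  have "continuous_on {a..b} (q s)" for s
    using \<open>t > 0\<close> unfolding q_def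
    by (cases "s > 0"; cases "s = t") (auto intro!: continuous_intros continuous_w continuous_wxx)
  with uniform_limit_energy_quotient[OF \<open>t > 0\<close>]
  obtain I J where I: "\<And>s. (q s has_integral I s) {a..b}"
    and J: "((\<lambda>x. 2 * (wt t x * wxx t x)) has_integral J) {a..b}" and "(I \<longlongrightarrow> J) (at t)"
    unfolding q_def[abs_def] by (rule uniform_limit_integral) auto
  then have "((\<lambda>s. - I s) \<longlongrightarrow> -2 * integral {a..b} (\<lambda>x. wt t x * wxx t x)) (at t)"
    by (auto intro!: tendsto_minus simp: integral_unique[OF J, symmetric])
  moreover have "\<forall>\<^sub>F s in at t. - I s = (E s - E t) / (s - t)"
    unfolding eventually_at
  proof (intro exI[of _ t] conjI ballI impI)
    fix s assume "s \<in> UNIV" "s \<noteq> t \<and> dist s t < t"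
    then have "s > 0" by (auto simp: dist_real_def)
    then have "((\<lambda>x. (w s x - w t x) * (wxx s x + wxx t x)) has_integral - (E s - E t)) {a..b}"
      using energy_diff[OF _ \<open>t > 0\<close> boundary, of s] \<open>t > 0\<close> unfolding E_def
      by (auto intro!: integrable_integral integrable_continuous_real continuous_intros
          continuous_w continuous_wxx)
    from has_integral_divide[OF this, of "s - t"] \<open>s > 0\<close>
    have "(q s has_integral - (E s - E t) / (s - t)) {a..b}"
      by (simp add: q_def[abs_def])
    then show "- I s = (E s - E t) / (s - t)"
      using has_integral_unique[OF I[of s]] by (simp add: minus_divide_left)
  qed (use \<open>t > 0\<close> in simp)
  ultimately show ?thesis
    unfolding has_field_derivative_iff E_def[symmetric] by (rule Lim_transform_eventually)
qed

end

lemma regular_evolution_diff: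
  assumes w: "regular_evolution a b w wt wx wxx" and v: "regular_evolution a b v vt vx vxx"
  shows "regular_evolution a b (\<lambda>t x. w t x - v t x) (\<lambda>t x. wt t x - vt t x)
           (\<lambda>t x. wx t x - vx t x) (\<lambda>t x. wxx t x - vxx t x)"
proof -
  interpret w: regular_evolution a b w wt wx wxx by (fact w)
  interpret v: regular_evolution a b v vt vx vxx by (fact v)
  have diff: "continuous_on ({0<..} \<times> {a..b}) (\<lambda>(t, x). g t x - h t x)"
    if "continuous_on ({0<..} \<times> {a..b}) (\<lambda>(t, x). g t x)"
       "continuous_on ({0<..} \<times> {a..b}) (\<lambda>(t, x). h t x)" for g h :: "real \<Rightarrow> real \<Rightarrow> real"
    using continuous_on_diff[OF that] by (simp add: case_prod_beta')
  show ?thesis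
    by unfold_locales
      (auto intro!: DERIV_diff w.deriv_t v.deriv_t w.deriv_x v.deriv_x w.deriv_xx v.deriv_xx
        diff w.continuous_t v.continuous_t w.continuous_xx v.continuous_xx w.interval)
qed

lemma deriv_le_value_at_0_if_sign_condition:
  fixes g g' :: "real \<Rightarrow> real"
  assumes deriv: "\<And>s. (g has_real_derivative g' s) (at s)" and sign: "\<And>s. s \<noteq> 0 \<Longrightarrow> s * g' s < 0"
  shows "g s \<le> g 0"
proof (cases "s = 0")
  case False
  then obtain z where z: "min s 0 < z" "z < max s 0" "g s - g 0 = (s - 0) * g' z"
    using MVT_between[of s 0 g g'] deriv by blast
  have "z \<noteq> 0" "z * g' z < 0" using z(1,2) sign by auto
  then have "(s - 0) * g' z < 0"
    using z(1,2) by (cases "s > 0") (auto simp: mult_less_0_iff)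
  then show ?thesis using z(3) by simp
qed simp

lemma lipschitz_on_interval_if_C1:
  fixes f f' :: "real \<Rightarrow> real"
  assumes deriv: "\<And>s. (f has_real_derivative f' s) (at s)" and cont: "continuous_on UNIV f'"
  obtains K where "K-lipschitz_on {a..b} f"
proof -
  have "compact (f' ` {a..b})"
    by (rule compact_continuous_image[OF continuous_on_subset[OF cont]]) auto
  then obtain K where "K > 0" and K: "\<And>y. y \<in> f' ` {a..b} \<Longrightarrow> norm y \<le> K"
    using compact_imp_bounded bounded_pos by metis
  have "K-lipschitz_on {a..b} f"
  proof (rule bounded_derivative_imp_lipschitz)
    show "(f has_derivative (\<lambda>h. f' x * h)) (at x within {a..b})" for x
      using has_field_derivative_imp_has_derivative[OF deriv[of x]] has_derivative_at_withinI by blast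
    show "onorm (\<lambda>h. f' x * h) \<le> K" if "x \<in> {a..b}" for x
      using K[of "f' x"] that by (intro onorm_le) (auto simp: abs_mult intro: mult_right_mono)
  qed (use \<open>K > 0\<close> in auto)
  then show ?thesis by (rule that)
qed

lemma mult_le_weighted_squares:
  fixes m a b :: real
  assumes "m > 0"
  shows "a * b \<le> (m / 2) * a^2 + b^2 / (2 * m)"
proof -
  have "0 \<le> (m * a - b)^2 / (2 * m)" using assms by simp
  also have "\<dots> = (m / 2) * a^2 - a * b + b^2 / (2 * m)"
    using assms by (simp add: field_simps power2_eq_square)
  finally show ?thesis by simp
qed

lemma lipschitz_on_max_0:
  fixes a :: "real \<Rightarrow> real"
  assumes "\<And>s r. s \<in> S \<Longrightarrow> r \<in> S \<Longrightarrow> \<bar>a s - a r\<bar> \<le> L * \<bar>s - r\<bar>"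
  shows "(max L 0)-lipschitz_on S a"
proof (rule lipschitz_onI)
  fix s r assume "s \<in> S" "r \<in> S"
  then have "\<bar>a s - a r\<bar> \<le> L * \<bar>s - r\<bar>" by (rule assms)
  also have "\<dots> \<le> max L 0 * \<bar>s - r\<bar>" by (intro mult_right_mono) auto
  finally show "dist (a s) (a r) \<le> max L 0 * dist s r" by (simp add: dist_real_def)
qed simp

lemma interpolated_coefficient_diff_sq_le:
  fixes a :: "real \<Rightarrow> real"
  assumes "L-lipschitz_on {0..} a" "P \<ge> 0" "\<tau>1 \<in> {0..1}" "\<tau>2 \<in> {0..1}" "r1 \<in> {0..R}" "r2 \<in> {0..R}"
  shows "(a (\<tau>1 * r1 + (1 - \<tau>1) * P) - a (\<tau>2 * r2 + (1 - \<tau>2) * P))^2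
           \<le> 2 * L^2 * ((R + P)^2 + 1) * ((\<tau>1 - \<tau>2)^2 + (r1 - r2)^2)"
proof -
  define x1 x2 where "x1 = \<tau>1 * r1 + (1 - \<tau>1) * P" and "x2 = \<tau>2 * r2 + (1 - \<tau>2) * P"
  have "x1 \<ge> 0" "x2 \<ge> 0"
    using assms unfolding x1_def x2_def by auto
  have "x1 - x2 = (\<tau>1 - \<tau>2) * (r1 - P) + \<tau>2 * (r1 - r2)"
    unfolding x1_def x2_def by (simp add: algebra_simps)
  moreover have "\<bar>r1 - P\<bar> \<le> R + P"
    using assms by auto
  ultimately have "\<bar>x1 - x2\<bar> \<le> \<bar>\<tau>1 - \<tau>2\<bar> * (R + P) + \<bar>r1 - r2\<bar>"
    using assms abs_triangle_ineq[of "(\<tau>1 - \<tau>2) * (r1 - P)" "\<tau>2 * (r1 - r2)"]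
      mult_left_mono[of "\<bar>r1 - P\<bar>" "R + P" "\<bar>\<tau>1 - \<tau>2\<bar>"] mult_right_mono[of "\<tau>2" 1 "\<bar>r1 - r2\<bar>"]
    by (simp add: abs_mult)
  then have "\<bar>a x1 - a x2\<bar> \<le> L * (\<bar>\<tau>1 - \<tau>2\<bar> * (R + P) + \<bar>r1 - r2\<bar>)"
    using lipschitz_onD[OF assms(1), of x1 x2] lipschitz_on_nonneg[OF assms(1)] \<open>x1 \<ge> 0\<close> \<open>x2 \<ge> 0\<close>
    by (auto simp: dist_real_def intro: order_trans mult_left_mono)
  then have "(a x1 - a x2)^2 \<le> L^2 * (\<bar>\<tau>1 - \<tau>2\<bar> * (R + P) + \<bar>r1 - r2\<bar>)^2"
    by (metis abs_ge_zero power2_abs power_mono power_mult_distrib)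
  also have "\<dots> \<le> L^2 * (2 * ((\<tau>1 - \<tau>2)^2 * (R + P)^2) + 2 * (r1 - r2)^2)"
    using sum_squares_bound[of "\<bar>\<tau>1 - \<tau>2\<bar> * (R + P)" "\<bar>r1 - r2\<bar>"]
    by (intro mult_left_mono) (auto simp: power2_sum power_mult_distrib)
  also have "\<dots> \<le> L^2 * (2 * ((\<tau>1 - \<tau>2)^2 * ((R + P)^2 + 1)) + 2 * ((r1 - r2)^2 * ((R + P)^2 + 1)))"
    using mult_left_mono[of 1 "(R + P)^2 + 1" "(r1 - r2)^2"]
    by (intro mult_left_mono add_mono) auto
  finally show ?thesis
    unfolding x1_def x2_def by (simp add: algebra_simps)
qed

lemma Gronwall_coupled_derivative_le:
  fixes C1 C2 C3 m lam R W X Z DW DX E G :: real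
  assumes "DW \<le> C1 * W + (C2 * W + C3) * Z" "DX \<le> - m * Z + lam * X"
    and "0 \<le> W" "0 \<le> Z" "X \<le> R" "0 \<le> C2" "0 \<le> C3" "m > 0" "lam \<ge> 0" "0 \<le> E" "E \<le> G"
  shows "E * (DW - (C1 + C2 * lam * R / m) * W + C2 / m * DX * W) \<le> G * C3 / m * (lam * R - DX)"
proof -
  have Z_le: "m * Z \<le> lam * R - DX"
    using assms mult_left_mono[of X R lam] by linarith
  have "C2 * W / m * DX \<le> C2 * W / m * (lam * R - m * Z)"
    using Z_le assms by (intro mult_left_mono) auto
  also have "\<dots> = C2 * lam * R / m * W - C2 * (W * Z)"
    using \<open>m > 0\<close> by (simp add: field_simps)
  finally have "DW - (C1 + C2 * lam * R / m) * W + C2 / m * DX * W \<le> C3 * Z"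
    using assms(1) by (simp add: algebra_simps)
  also have "C3 * Z \<le> C3 / m * (lam * R - DX)"
  proof -
    have "C3 * (m * Z) \<le> C3 * (lam * R - DX)"
      using Z_le \<open>0 \<le> C3\<close> by (rule mult_left_mono)
    then show ?thesis using \<open>m > 0\<close> by (simp add: field_simps)
  qed
  finally have "E * (DW - (C1 + C2 * lam * R / m) * W + C2 / m * DX * W) \<le> E * (C3 / m * (lam * R - DX))"
    using \<open>0 \<le> E\<close> by (rule mult_left_mono)
  also have "\<dots> \<le> G * (C3 / m * (lam * R - DX))"
  proof (rule mult_right_mono)
    have "0 \<le> lam * R - DX"
      using Z_le \<open>m > 0\<close> \<open>0 \<le> Z\<close> by (smt (verit) mult_nonneg_nonneg)
    then show "0 \<le> C3 / m * (lam * R - DX)"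
      using \<open>m > 0\<close> \<open>0 \<le> C3\<close> by simp
  qed (rule \<open>E \<le> G\<close>)
  finally show ?thesis by simp
qed

text \<open>The weight \<open>exp (\<mu> X)\<close> absorbs the term \<open>C2 W Z\<close> through \<open>X' \<le> -m Z + lam X\<close>, and the
  remaining \<open>C3 Z\<close> is bounded by a multiple of \<open>lam R - X'\<close>, whose integral is controlled.\<close>

lemma Gronwall_coupled_monotone:
  fixes W X DW DX Z :: "real \<Rightarrow> real" and C1 C2 C3 m lam R e t :: real
  defines "\<kappa> \<equiv> C1 + C2 * lam * R / m" and "\<mu> \<equiv> C2 / m" and "c \<equiv> exp (C2 / m * R) * C3 / m"
  assumes "0 \<le> e" "e \<le> t"
    and W': "\<And>s. s \<in> {e..t} \<Longrightarrow> (W has_real_derivative DW s) (at s)"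
    and X': "\<And>s. s \<in> {e..t} \<Longrightarrow> (X has_real_derivative DX s) (at s)"
    and W_ineq: "\<And>s. s \<in> {e..t} \<Longrightarrow> DW s \<le> C1 * W s + (C2 * W s + C3) * Z s"
    and X_ineq: "\<And>s. s \<in> {e..t} \<Longrightarrow> DX s \<le> - m * Z s + lam * X s"
    and bounds: "\<And>s. s \<in> {e..t} \<Longrightarrow> 0 \<le> W s \<and> 0 \<le> Z s \<and> 0 \<le> X s \<and> X s \<le> R"
    and "0 \<le> C1" "0 \<le> C2" "0 \<le> C3" "m > 0" "lam \<ge> 0"
  shows "W t * exp (- \<kappa> * t + \<mu> * X t) - c * (lam * R * t - X t)
           \<le> W e * exp (- \<kappa> * e + \<mu> * X e) - c * (lam * R * e - X e)"
proof (rule DERIV_nonpos_imp_nonincreasing[OF \<open>e \<le> t\<close>])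
  fix s assume "e \<le> s" "s \<le> t"
  then have s: "s \<in> {e..t}" by simp
  define E where "E = exp (- \<kappa> * s + \<mu> * X s)"
  have "0 \<le> X s" "X s \<le> R"
    using bounds[OF s] by auto
  then have "0 \<le> \<kappa>" "0 \<le> \<mu>"
    using assms unfolding \<kappa>_def \<mu>_def by auto
  then have "0 \<le> \<kappa> * s" "\<mu> * X s \<le> \<mu> * R"
    using s \<open>0 \<le> e\<close> \<open>X s \<le> R\<close> by (auto intro: mult_left_mono)
  then have "E \<le> exp (C2 / m * R)"
    unfolding E_def \<mu>_def by simp
  then have "E * (DW s - \<kappa> * W s + \<mu> * DX s * W s) - c * (lam * R - DX s) \<le> 0"
    using Gronwall_coupled_derivative_le[OF W_ineq[OF s] X_ineq[OF s], where E=E and G="exp (C2 / m * R)"]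
      bounds[OF s] assms unfolding \<kappa>_def \<mu>_def c_def E_def by simp
  moreover have "((\<lambda>s. W s * exp (- \<kappa> * s + \<mu> * X s) - c * (lam * R * s - X s)) has_real_derivative
      E * (DW s - \<kappa> * W s + \<mu> * DX s * W s) - c * (lam * R - DX s)) (at s)"
    unfolding E_def by (auto intro!: derivative_eq_intros W'[OF s] X'[OF s] simp: algebra_simps)
  ultimately show "\<exists>y. ((\<lambda>s. W s * exp (- \<kappa> * s + \<mu> * X s) - c * (lam * R * s - X s))
      has_real_derivative y) (at s) \<and> y \<le> 0" by blast
qed

lemma Gronwall_coupled:
  fixes W X DW DX Z :: "real \<Rightarrow> real" and C1 C2 C3 m lam R e t :: real
  assumes "0 \<le> e" "e \<le> t"
    and W': "\<And>s. s \<in> {e..t} \<Longrightarrow> (W has_real_derivative DW s) (at s)"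
    and X': "\<And>s. s \<in> {e..t} \<Longrightarrow> (X has_real_derivative DX s) (at s)"
    and W_ineq: "\<And>s. s \<in> {e..t} \<Longrightarrow> DW s \<le> C1 * W s + (C2 * W s + C3) * Z s"
    and X_ineq: "\<And>s. s \<in> {e..t} \<Longrightarrow> DX s \<le> - m * Z s + lam * X s"
    and bounds: "\<And>s. s \<in> {e..t} \<Longrightarrow> 0 \<le> W s \<and> 0 \<le> Z s \<and> 0 \<le> X s \<and> X s \<le> R"
    and "0 \<le> C1" "0 \<le> C2" "0 \<le> C3" "m > 0" "lam \<ge> 0"
  shows "W t \<le> exp ((C1 + C2 * lam * R / m) * t + C2 * R / m) * (W e + C3 / m * (lam * R * t + R))"
proof -
  define \<kappa> \<mu> where "\<kappa> = C1 + C2 * lam * R / m" and "\<mu> = C2 / m"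
  define c where "c = exp (\<mu> * R) * C3 / m"
  have "R \<ge> 0"
    using bounds[of e] \<open>e \<le> t\<close> by auto
  then have "\<kappa> \<ge> 0" "\<mu> \<ge> 0" "c \<ge> 0"
    using assms unfolding \<kappa>_def \<mu>_def c_def by auto
  have "W t * exp (- \<kappa> * t + \<mu> * X t) - c * (lam * R * t - X t)
      \<le> W e * exp (- \<kappa> * e + \<mu> * X e) - c * (lam * R * e - X e)"
    using Gronwall_coupled_monotone[OF assms] unfolding \<kappa>_def \<mu>_def c_def .
  moreover have "c * (lam * R * (t - e) - X t + X e) = c * (lam * R * t - X t) - c * (lam * R * e - X e)"
    by (simp add: algebra_simps)
  ultimately have "W t * exp (- \<kappa> * t + \<mu> * X t)
      \<le> W e * exp (- \<kappa> * e + \<mu> * X e) + c * (lam * R * (t - e) - X t + X e)"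
    by linarith
  also have "\<dots> \<le> exp (\<mu> * R) * W e + c * (lam * R * t + R)"
  proof (rule add_mono)
    have "0 \<le> \<kappa> * e" "\<mu> * X e \<le> \<mu> * R"
      using bounds[of e] \<open>e \<le> t\<close> \<open>0 \<le> e\<close> \<open>\<kappa> \<ge> 0\<close> \<open>\<mu> \<ge> 0\<close> by (auto intro: mult_left_mono)
    then have "exp (- \<kappa> * e + \<mu> * X e) \<le> exp (\<mu> * R)"
      by simp
    from mult_left_mono[OF this, of "W e"] bounds[of e] \<open>e \<le> t\<close>
    show "W e * exp (- \<kappa> * e + \<mu> * X e) \<le> exp (\<mu> * R) * W e"
      by (simp add: mult.commute)
    have "0 \<le> lam * R * e"
      using \<open>0 \<le> e\<close> \<open>lam \<ge> 0\<close> \<open>R \<ge> 0\<close> by simp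
    then show "c * (lam * R * (t - e) - X t + X e) \<le> c * (lam * R * t + R)"
      using bounds[of t] bounds[of e] \<open>e \<le> t\<close> \<open>c \<ge> 0\<close>
      by (intro mult_left_mono) (auto simp: algebra_simps)
  qed
  finally have "W t * exp (- \<kappa> * t + \<mu> * X t) \<le> exp (\<mu> * R) * (W e + C3 / m * (lam * R * t + R))"
    unfolding c_def by (simp add: field_simps)
  moreover have "W t \<le> W t * exp (- \<kappa> * t + \<mu> * X t) * exp (\<kappa> * t)"
    using mult_left_mono[of 1 "exp (\<mu> * X t)" "W t"] bounds[of t] \<open>\<mu> \<ge> 0\<close> \<open>e \<le> t\<close>
    by (simp add: mult.assoc flip: exp_add)
  ultimately have "W t \<le> exp (\<mu> * R) * (W e + C3 / m * (lam * R * t + R)) * exp (\<kappa> * t)"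
    by (smt (verit) exp_gt_zero mult_right_mono)
  then show ?thesis
    unfolding \<kappa>_def \<mu>_def by (simp add: exp_add mult_ac)
qed

section \<open>Classical solutions\<close>

locale classical_solution = regular_evolution 0 pi u ut ux uxx
  for u ut ux uxx :: "real \<Rightarrow> real \<Rightarrow> real" +
  fixes A :: "real \<Rightarrow> real" and lam :: real and f :: "real \<Rightarrow> real"
  assumes h10: "\<And>t. t \<ge> 0 \<Longrightarrow> h10 (u t)"
    and continuous_h10: "\<And>t. t \<ge> 0 \<Longrightarrow> ((\<lambda>s. h10_dist (u s) (u t)) \<longlongrightarrow> 0) (at t within {0..})"
    and pde: "\<And>t x. t > 0 \<Longrightarrow> x \<in> {0<..<pi} \<Longrightarrow>
                ut t x = A (h10_sq (u t)) * uxx t x + lam * f (u t x)"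

lemma is_solution_imp_classical_solution:
  assumes "is_solution A lam f u0 u"
  obtains ut ux uxx where "classical_solution u ut ux uxx A lam f"
proof -
  obtain ut ux uxx where
    D: "\<forall>t>0. \<forall>x\<in>{0..pi}. ((\<lambda>s. u s x) has_real_derivative ut t x) (at t) \<and>
          (u t has_real_derivative ux t x) (at x within {0..pi}) \<and>
          (ux t has_real_derivative uxx t x) (at x within {0..pi})"
    and C: "continuous_on ({0<..} \<times> {0..pi}) (\<lambda>(t, x). ut t x)"
      "continuous_on ({0<..} \<times> {0..pi}) (\<lambda>(t, x). uxx t x)"
    and P: "\<forall>t>0. \<forall>x\<in>{0<..<pi}. ut t x = A (h10_sq (u t)) * uxx t x + lam * f (u t x)"
    using assms unfolding is_solution_def by blast
  have H: "\<forall>t\<ge>0. h10 (u t)" "\<forall>t\<ge>0. ((\<lambda>s. h10_dist (u s) (u t)) \<longlongrightarrow> 0) (at t within {0..})"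
    using assms unfolding is_solution_def by blast+
  show ?thesis
  proof (rule that, unfold_locales)
    show "0 \<le> pi" by simp
  qed (use D C P H in blast)+
qed

lemma is_solution_h10: "is_solution A lam f u0 u \<Longrightarrow> t \<ge> 0 \<Longrightarrow> h10 (u t)"
  unfolding is_solution_def by blast

lemma is_solution_continuous:
  "is_solution A lam f u0 u \<Longrightarrow> t \<ge> 0 \<Longrightarrow> ((\<lambda>s. h10_dist (u s) (u t)) \<longlongrightarrow> 0) (at t within {0..})"
  unfolding is_solution_def by blast

lemma is_solution_initial_h10_deriv:
  "is_solution A lam f u0 u \<Longrightarrow> h10_deriv (u 0) = h10_deriv u0"
  unfolding is_solution_def by (intro h10_deriv_cong) auto

context classical_solution
begin

lemma boundary: "t \<ge> 0 \<Longrightarrow> u t 0 = 0 \<and> u t pi = 0"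
  using h10 unfolding h10_def h10_rep_def by fastforce

lemma h10_rep_ux: "t > 0 \<Longrightarrow> h10_rep (u t) (ux t)"
  using boundary by (intro h10_rep_of_C1 deriv_x continuous_wx) auto

lemma h10_sq_eq_integral: "t > 0 \<Longrightarrow> h10_sq (u t) = integral {0..pi} (\<lambda>x. (ux t x)^2)"
  by (rule h10_sq_eq[OF h10_rep_ux])

lemma has_real_derivative_h10_sq:
  assumes "t > 0"
  shows "((\<lambda>s. h10_sq (u s)) has_real_derivative -2 * integral {0..pi} (\<lambda>x. ut t x * uxx t x)) (at t)"
proof (rule has_field_derivative_transform_within_open[where S="{0<..}"])
  show "((\<lambda>s. integral {0..pi} (\<lambda>x. (ux s x)^2)) has_real_derivative
      -2 * integral {0..pi} (\<lambda>x. ut t x * uxx t x)) (at t)"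
    using assms boundary by (intro has_real_derivative_energy) auto
qed (use assms h10_sq_eq_integral in auto)

lemma abs_le_sqrt_pi_bound:
  assumes "t > 0" "h10_sq (u t) \<le> R" "x \<in> {0..pi}"
  shows "\<bar>u t x\<bar> \<le> sqrt (pi * R)"
proof -
  have "(u t x)^2 \<le> pi * h10_sq (u t)"
    using h10_rep_square_le[OF h10_rep_ux] h10_sq_eq_integral assms by simp
  also have "\<dots> \<le> pi * R"
    using assms(2) by simp
  finally show ?thesis
    using real_sqrt_le_mono[of "(u t x)^2" "pi * R"] by simp
qed

lemma tendsto_h10_sq_at_0: "((\<lambda>s. h10_sq (u s)) \<longlongrightarrow> h10_sq (u 0)) (at_right 0)"
proof -
  have dist: "((\<lambda>s. h10_dist (u s) (u 0)) \<longlongrightarrow> 0) (at_right 0)"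
    using continuous_h10[of 0] by (rule tendsto_within_subset) auto
  have "\<bar>sqrt (h10_sq (u s)) - sqrt (h10_sq (u 0))\<bar> \<le> h10_dist (u s) (u 0) * 1" if "s > 0" for s
    using sqrt_h10_sq_le[of "u s" "u 0"] sqrt_h10_sq_le[of "u 0" "u s"] h10 that
    by (auto simp: h10_dist_commute)
  then have "((\<lambda>s. sqrt (h10_sq (u s)) - sqrt (h10_sq (u 0))) \<longlongrightarrow> 0) (at_right 0)"
    by (intro tendsto_0_le[OF dist, where K=1] eventually_mono[OF eventually_at_right_less])
       (auto simp: h10_dist_nonneg)
  then have "((\<lambda>s. sqrt (h10_sq (u s))) \<longlongrightarrow> sqrt (h10_sq (u 0))) (at_right 0)"
    by (simp add: LIM_zero_iff)
  then have "((\<lambda>s. (sqrt (h10_sq (u s)))^2) \<longlongrightarrow> (sqrt (h10_sq (u 0)))^2) (at_right 0)"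
    by (rule tendsto_power)
  then show ?thesis by (simp add: h10_sq_nonneg)
qed

end

locale dissipative_nonlinearity =
  fixes f f' :: "real \<Rightarrow> real"
  assumes f_deriv: "\<And>s. (f has_real_derivative f' s) (at s)"
    and f'_le_1: "\<And>s. f' s \<le> 1"
    and continuous_f': "continuous_on UNIV f'"
    and f_0: "f 0 = 0"

lemma dissipative_nonlinearity_if_sign_condition:
  fixes f f' f'' :: "real \<Rightarrow> real"
  assumes "\<And>s. (f has_real_derivative f' s) (at s)" and f'': "\<And>s. (f' has_real_derivative f'' s) (at s)"
    and "f' 0 = 1" "\<And>s. s \<noteq> 0 \<Longrightarrow> s * f'' s < 0" "f 0 = 0"
  shows "dissipative_nonlinearity f f'"
  using assms deriv_le_value_at_0_if_sign_condition[of f' f'']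
  by unfold_locales (auto intro: has_real_derivative_imp_continuous_on)

locale dissipative_solution =
  classical_solution u ut ux uxx A lam f + dissipative_nonlinearity f f'
  for u ut ux uxx A lam f f' +
  fixes m :: real
  assumes A_ge: "\<And>r. r \<ge> 0 \<Longrightarrow> m \<le> A r"
    and m_pos: "m > 0"
    and lam_nonneg: "lam \<ge> 0"
begin

lemma integral_f_uxx:
  assumes "t > 0"
  shows "integral {0..pi} (\<lambda>x. f (u t x) * uxx t x) = - integral {0..pi} (\<lambda>x. f' (u t x) * (ux t x)^2)"
proof -
  have "integral {0..pi} (\<lambda>x. f' (u t x) * ux t x * ux t x) = - integral {0..pi} (\<lambda>x. f (u t x) * uxx t x)"
    using assms boundary[of t] f_0 continuous_w[OF assms]
    by (intro integration_by_parts_vanishing_boundary DERIV_chain2[OF f_deriv] deriv_x deriv_xx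
        continuous_intros continuous_on_compose2[OF continuous_f'] continuous_wx continuous_wxx) auto
  then show ?thesis by (simp add: power2_eq_square mult.assoc)
qed

lemma h10_sq_derivative_le:
  assumes "t > 0"
  shows "-2 * integral {0..pi} (\<lambda>x. ut t x * uxx t x)
           \<le> -2 * m * integral {0..pi} (\<lambda>x. (uxx t x)^2) + 2 * lam * h10_sq (u t)"
proof -
  define X where "X = h10_sq (u t)"
  define Z where "Z = integral {0..pi} (\<lambda>x. (uxx t x)^2)"
  define F where "F = integral {0..pi} (\<lambda>x. f (u t x) * uxx t x)"
  have cont: "continuous_on {0..pi} (u t)" "continuous_on {0..pi} (ux t)" "continuous_on {0..pi} (uxx t)"
    using assms by (auto intro: continuous_w continuous_wx continuous_wxx)
  have cont_f: "continuous_on {0..pi} (\<lambda>x. f (u t x))" "continuous_on {0..pi} (\<lambda>x. f' (u t x))"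
    using continuous_on_compose2[OF DERIV_continuous_on[OF f_deriv] cont(1)]
      continuous_on_compose2[OF continuous_f' cont(1)] by auto
  have "integral {0..pi} (\<lambda>x. ut t x * uxx t x)
      = integral {0..pi} (\<lambda>x. A X * (uxx t x)^2 + lam * (f (u t x) * uxx t x))"
    using assms unfolding X_def
    by (intro integral_spike[of "{0, pi}"]) (auto simp: pde power2_eq_square algebra_simps)
  also have "\<dots> = A X * Z + lam * F"
    unfolding Z_def F_def using cont cont_f
    by (subst integral_add) (auto intro!: integrable_continuous_real continuous_intros)
  finally have eq: "integral {0..pi} (\<lambda>x. ut t x * uxx t x) = A X * Z + lam * F" .
  have "integral {0..pi} (\<lambda>x. f' (u t x) * (ux t x)^2) \<le> integral {0..pi} (\<lambda>x. (ux t x)^2)"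
    using cont cont_f mult_right_mono[OF f'_le_1, of "(ux t _)^2"]
    by (intro integral_le) (auto intro!: integrable_continuous_real continuous_intros)
  then have "lam * (- X) \<le> lam * F"
    using integral_f_uxx[OF assms] h10_sq_eq_integral[OF assms] lam_nonneg
    unfolding X_def F_def by (intro mult_left_mono) auto
  then have "- (lam * X) \<le> lam * F" by simp
  moreover have "m * Z \<le> A X * Z"
    unfolding X_def Z_def using A_ge h10_sq_nonneg integral_square_nonneg by (intro mult_right_mono) auto
  ultimately show ?thesis
    unfolding eq X_def Z_def by (simp add: algebra_simps)
qed

lemma h10_sq_le_exp:
  assumes "t \<ge> 0"
  shows "h10_sq (u t) \<le> exp (2 * lam * t) * h10_sq (u 0)"
proof (cases "t = 0")
  case False
  with assms have "t > 0" by simp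
  define \<Phi> where "\<Phi> s = exp (- (2 * lam * s)) * h10_sq (u s)" for s
  have "\<Phi> t \<le> \<Phi> e" if "0 < e" "e \<le> t" for e
  proof (rule DERIV_nonpos_imp_nonincreasing[OF \<open>e \<le> t\<close>])
    fix s assume "e \<le> s" "s \<le> t"
    with \<open>0 < e\<close> have "s > 0" by simp
    define D where "D = -2 * integral {0..pi} (\<lambda>x. ut s x * uxx s x)"
    have "0 \<le> 2 * m * integral {0..pi} (\<lambda>x. (uxx s x)^2)"
      using m_pos integral_square_nonneg[of "{0..pi}" "uxx s"] by simp
    then have "D \<le> 2 * lam * h10_sq (u s)"
      using h10_sq_derivative_le[OF \<open>s > 0\<close>] unfolding D_def by simp
    then have "exp (- (2 * lam * s)) * (D - 2 * lam * h10_sq (u s)) \<le> 0"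
      by (simp add: mult_nonneg_nonpos)
    moreover have "(\<Phi> has_real_derivative exp (- (2 * lam * s)) * (D - 2 * lam * h10_sq (u s))) (at s)"
      unfolding \<Phi>_def D_def using has_real_derivative_h10_sq[OF \<open>s > 0\<close>]
      by (auto intro!: derivative_eq_intros simp: algebra_simps)
    ultimately show "\<exists>y. (\<Phi> has_real_derivative y) (at s) \<and> y \<le> 0" by blast
  qed
  then have "\<forall>\<^sub>F e in at_right 0. \<Phi> t \<le> \<Phi> e"
    unfolding eventually_at_right[OF \<open>t > 0\<close>] using \<open>t > 0\<close> by (intro exI[of _ t]) auto
  moreover have "(\<Phi> \<longlongrightarrow> exp (- (2 * lam * 0)) * h10_sq (u 0)) (at_right 0)"
    unfolding \<Phi>_def by (intro tendsto_mult tendsto_h10_sq_at_0 tendsto_intros)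
  ultimately have "\<Phi> t \<le> h10_sq (u 0)"
    by (intro tendsto_lowerbound[of \<Phi> _ "at_right 0"]) auto
  then show ?thesis
    unfolding \<Phi>_def by (simp add: exp_minus field_simps)
qed simp

lemma h10_sq_le_exp_bound:
  assumes "h10_sq (u 0) \<le> R0" "s \<in> {0..T}"
  shows "h10_sq (u s) \<le> exp (2 * lam * T) * R0"
proof -
  have "exp (2 * lam * s) * h10_sq (u 0) \<le> exp (2 * lam * T) * R0"
    using assms lam_nonneg h10_sq_nonneg by (intro mult_mono) (auto simp: mult_left_mono)
  then show ?thesis
    using h10_sq_le_exp[of s] assms(2) by auto
qed

end

section \<open>Continuous dependence\<close>

locale solution_pair =
  U: dissipative_solution U Ut Ux Uxx A1 lam f f' m +
  V: dissipative_solution V Vt Vx Vxx A2 lam f f' m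
  for U Ut Ux Uxx A1 V Vt Vx Vxx A2 lam f f' m
begin

lemma h10_dist_sq_eq_integral:
  "t > 0 \<Longrightarrow> (h10_dist (U t) (V t))^2 = integral {0..pi} (\<lambda>x. (Ux t x - Vx t x)^2)"
  using h10_dist_eq[OF U.h10_rep_ux V.h10_rep_ux] by (simp add: L2_norm_square)

lemma has_real_derivative_dist_sq:
  assumes "t > 0"
  shows "((\<lambda>s. (h10_dist (U s) (V s))^2) has_real_derivative
           -2 * integral {0..pi} (\<lambda>x. (Ut t x - Vt t x) * (Uxx t x - Vxx t x))) (at t)"
proof -
  interpret D: regular_evolution 0 pi "\<lambda>t x. U t x - V t x" "\<lambda>t x. Ut t x - Vt t x"
      "\<lambda>t x. Ux t x - Vx t x" "\<lambda>t x. Uxx t x - Vxx t x"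
    by (rule regular_evolution_diff[OF U.regular_evolution_axioms V.regular_evolution_axioms])
  show ?thesis
  proof (rule has_field_derivative_transform_within_open[where S="{0<..}"])
    show "((\<lambda>s. integral {0..pi} (\<lambda>x. (Ux s x - Vx s x)^2)) has_real_derivative
        -2 * integral {0..pi} (\<lambda>x. (Ut t x - Vt t x) * (Uxx t x - Vxx t x))) (at t)"
      using assms U.boundary V.boundary by (intro D.has_real_derivative_energy) auto
  qed (use assms h10_dist_sq_eq_integral in auto)
qed

lemma diff_square_le_pi_dist_sq:
  "t > 0 \<Longrightarrow> x \<in> {0..pi} \<Longrightarrow> (U t x - V t x)^2 \<le> pi * (h10_dist (U t) (V t))^2"
  using h10_rep_square_le[OF h10_rep_diff[OF U.h10_rep_ux V.h10_rep_ux]] h10_dist_sq_eq_integral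
  by simp

lemma h10_sq_diff_square_le:
  "t > 0 \<Longrightarrow> (h10_sq (U t) - h10_sq (V t))^2
     \<le> 2 * (h10_sq (U t) + h10_sq (V t)) * (h10_dist (U t) (V t))^2"
  using L2_norm_square_diff_le[of "Ux t" "{0..pi}" "Vx t"]
    h10_rep_imp_square_integrable[OF U.h10_rep_ux] h10_rep_imp_square_integrable[OF V.h10_rep_ux]
  by (simp add: L2_norm_square U.h10_sq_eq_integral V.h10_sq_eq_integral h10_dist_sq_eq_integral)

lemma pde_difference_le:
  assumes "t > 0" "x \<in> {0<..<pi}"
    and lip: "K-lipschitz_on {-\<rho>..\<rho>} f" and "\<bar>U t x\<bar> \<le> \<rho>" "\<bar>V t x\<bar> \<le> \<rho>"
  shows "- ((Ut t x - Vt t x) * (Uxx t x - Vxx t x))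
           \<le> (A1 (h10_sq (U t)) - A2 (h10_sq (V t)))^2 / (2 * m) * (Vxx t x)^2
             + (lam * K)^2 * (U t x - V t x)^2 / (2 * m)"
proof -
  define \<alpha>1 \<alpha>2 where "\<alpha>1 = A1 (h10_sq (U t))" and "\<alpha>2 = A2 (h10_sq (V t))"
  define a b e where "a = Uxx t x - Vxx t x" and "b = Vxx t x" and "e = f (U t x) - f (V t x)"
  have "- ((Ut t x - Vt t x) * a) = - \<alpha>1 * a^2 + a * (- (\<alpha>1 - \<alpha>2) * b) + a * (- lam * e)"
    using U.pde[OF assms(1,2)] V.pde[OF assms(1,2)]
    unfolding \<alpha>1_def \<alpha>2_def a_def b_def e_def by (simp add: power2_eq_square algebra_simps)
  also have "\<dots> \<le> - m * a^2 + ((m / 2) * a^2 + (- (\<alpha>1 - \<alpha>2) * b)^2 / (2 * m))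
      + ((m / 2) * a^2 + (- lam * e)^2 / (2 * m))"
  proof -
    have "- \<alpha>1 * a^2 \<le> - m * a^2"
      using U.A_ge[OF h10_sq_nonneg] unfolding \<alpha>1_def by (simp add: mult_right_mono)
    then show ?thesis
      using mult_le_weighted_squares[OF U.m_pos, of a "- (\<alpha>1 - \<alpha>2) * b"]
        mult_le_weighted_squares[OF U.m_pos, of a "- lam * e"] by linarith
  qed
  also have "\<dots> = (\<alpha>1 - \<alpha>2)^2 / (2 * m) * b^2 + lam^2 * e^2 / (2 * m)"
    using U.m_pos by (simp add: power2_eq_square field_simps)
  also have "e^2 \<le> K^2 * (U t x - V t x)^2"
  proof -
    have "\<bar>e\<bar> \<le> K * \<bar>U t x - V t x\<bar>"
      using lipschitz_onD[OF lip, of "U t x" "V t x"] assms(4,5) unfolding e_def dist_real_def by (simp add: abs_le_iff)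
    then have "\<bar>e\<bar>^2 \<le> (K * \<bar>U t x - V t x\<bar>)^2" by (rule power_mono) simp
    then show ?thesis by (simp add: power_mult_distrib)
  qed
  finally show ?thesis
    using U.m_pos unfolding a_def b_def e_def \<alpha>1_def \<alpha>2_def
    by (simp add: power_mult_distrib divide_right_mono mult_left_mono)
qed

lemma integral_pde_difference_le:
  assumes "t > 0" and R: "h10_sq (U t) \<le> R" "h10_sq (V t) \<le> R"
    and lip: "K-lipschitz_on {- sqrt (pi * R)..sqrt (pi * R)} f"
  shows "- integral {0..pi} (\<lambda>x. (Ut t x - Vt t x) * (Uxx t x - Vxx t x))
           \<le> (A1 (h10_sq (U t)) - A2 (h10_sq (V t)))^2 / (2 * m) * integral {0..pi} (\<lambda>x. (Vxx t x)^2)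
             + (lam * K)^2 / (2 * m) * (pi * pi * (h10_dist (U t) (V t))^2)"
proof -
  define \<delta> where "\<delta> = (A1 (h10_sq (U t)) - A2 (h10_sq (V t)))^2"
  have cont: "continuous_on {0..pi} (U t)" "continuous_on {0..pi} (V t)"
    "continuous_on {0..pi} (Ut t)" "continuous_on {0..pi} (Vt t)"
    "continuous_on {0..pi} (Uxx t)" "continuous_on {0..pi} (Vxx t)"
    using \<open>t > 0\<close> by (auto intro: U.continuous_w V.continuous_w U.continuous_wt V.continuous_wt
        U.continuous_wxx V.continuous_wxx)
  have "- integral {0..pi} (\<lambda>x. (Ut t x - Vt t x) * (Uxx t x - Vxx t x))
      = integral {0..pi} (\<lambda>x. - ((Ut t x - Vt t x) * (Uxx t x - Vxx t x)))"
    by simp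
  also have "\<dots> \<le> integral {0..pi} (\<lambda>x. \<delta> / (2 * m) * (Vxx t x)^2 + (lam * K)^2 / (2 * m) * (U t x - V t x)^2)"
  proof (rule integral_mono_interior)
    fix x assume "x \<in> {0<..<pi}"
    then show "- ((Ut t x - Vt t x) * (Uxx t x - Vxx t x))
        \<le> \<delta> / (2 * m) * (Vxx t x)^2 + (lam * K)^2 / (2 * m) * (U t x - V t x)^2"
      using pde_difference_le[OF \<open>t > 0\<close> _ lip U.abs_le_sqrt_pi_bound V.abs_le_sqrt_pi_bound] R \<open>t > 0\<close>
      unfolding \<delta>_def by auto
  qed (use cont U.m_pos in \<open>auto intro!: integrable_continuous_real continuous_intros\<close>)
  also have "\<dots> = \<delta> / (2 * m) * integral {0..pi} (\<lambda>x. (Vxx t x)^2)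
      + (lam * K)^2 / (2 * m) * integral {0..pi} (\<lambda>x. (U t x - V t x)^2)"
    using cont U.m_pos by (subst integral_add) (auto intro!: integrable_continuous_real continuous_intros)
  also have "\<dots> \<le> \<delta> / (2 * m) * integral {0..pi} (\<lambda>x. (Vxx t x)^2)
      + (lam * K)^2 / (2 * m) * (pi * pi * (h10_dist (U t) (V t))^2)"
  proof -
    have "integral {0..pi} (\<lambda>x. (U t x - V t x)^2) \<le> integral {0..pi} (\<lambda>x. pi * (h10_dist (U t) (V t))^2)"
      using diff_square_le_pi_dist_sq[OF \<open>t > 0\<close>] cont
      by (intro integral_le) (auto intro!: integrable_continuous_real continuous_intros)
    then show ?thesis
      using U.m_pos by (intro add_left_mono mult_left_mono) auto
  qed
  finally show ?thesis unfolding \<delta>_def .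
qed

lemma coefficient_diff_sq_le:
  assumes "t > 0" and R: "h10_sq (U t) \<le> R" "h10_sq (V t) \<le> R"
    and coeff: "\<And>r1 r2. r1 \<in> {0..R} \<Longrightarrow> r2 \<in> {0..R} \<Longrightarrow> (A1 r1 - A2 r2)^2 \<le> \<Lambda> * (d + (r1 - r2)^2)"
    and "\<Lambda> \<ge> 0"
  shows "(A1 (h10_sq (U t)) - A2 (h10_sq (V t)))^2 \<le> \<Lambda> * (d + 4 * R * (h10_dist (U t) (V t))^2)"
proof -
  have "2 * (h10_sq (U t) + h10_sq (V t)) * (h10_dist (U t) (V t))^2 \<le> 4 * R * (h10_dist (U t) (V t))^2"
    using R by (intro mult_right_mono) auto
  then have "(h10_sq (U t) - h10_sq (V t))^2 \<le> 4 * R * (h10_dist (U t) (V t))^2"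
    using h10_sq_diff_square_le[OF \<open>t > 0\<close>] by linarith
  then have "\<Lambda> * (d + (h10_sq (U t) - h10_sq (V t))^2) \<le> \<Lambda> * (d + 4 * R * (h10_dist (U t) (V t))^2)"
    using \<open>\<Lambda> \<ge> 0\<close> by (intro mult_left_mono) auto
  moreover have "(A1 (h10_sq (U t)) - A2 (h10_sq (V t)))^2 \<le> \<Lambda> * (d + (h10_sq (U t) - h10_sq (V t))^2)"
    using R h10_sq_nonneg by (intro coeff) auto
  ultimately show ?thesis by linarith
qed

lemma dist_sq_derivative_le:
  assumes "t > 0" and R: "h10_sq (U t) \<le> R" "h10_sq (V t) \<le> R"
    and coeff: "\<And>r1 r2. r1 \<in> {0..R} \<Longrightarrow> r2 \<in> {0..R} \<Longrightarrow> (A1 r1 - A2 r2)^2 \<le> \<Lambda> * (d + (r1 - r2)^2)"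
    and lip: "K-lipschitz_on {- sqrt (pi * R)..sqrt (pi * R)} f" and "\<Lambda> \<ge> 0"
  shows "-2 * integral {0..pi} (\<lambda>x. (Ut t x - Vt t x) * (Uxx t x - Vxx t x))
           \<le> (lam * K * pi)^2 / m * (h10_dist (U t) (V t))^2
             + (4 * R * \<Lambda> / m * (h10_dist (U t) (V t))^2 + \<Lambda> * d / m) * integral {0..pi} (\<lambda>x. (Vxx t x)^2)"
proof -
  define W where "W = (h10_dist (U t) (V t))^2"
  define Z where "Z = integral {0..pi} (\<lambda>x. (Vxx t x)^2)"
  have "(A1 (h10_sq (U t)) - A2 (h10_sq (V t)))^2 / m * Z \<le> \<Lambda> * (d + 4 * R * W) / m * Z"
    using coefficient_diff_sq_le[OF assms(1-4) \<open>\<Lambda> \<ge> 0\<close>] U.m_pos integral_square_nonneg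
    unfolding W_def Z_def by (intro mult_right_mono divide_right_mono) auto
  moreover have "-2 * integral {0..pi} (\<lambda>x. (Ut t x - Vt t x) * (Uxx t x - Vxx t x))
      \<le> (A1 (h10_sq (U t)) - A2 (h10_sq (V t)))^2 / m * Z + (lam * K * pi)^2 / m * W"
    using integral_pde_difference_le[OF \<open>t > 0\<close> R lip] U.m_pos unfolding W_def Z_def
    by (simp add: field_simps power_mult_distrib power2_eq_square)
  ultimately have "-2 * integral {0..pi} (\<lambda>x. (Ut t x - Vt t x) * (Uxx t x - Vxx t x))
      \<le> \<Lambda> * (d + 4 * R * W) / m * Z + (lam * K * pi)^2 / m * W"
    by linarith
  also have "\<dots> = (lam * K * pi)^2 / m * W + (4 * R * \<Lambda> / m * W + \<Lambda> * d / m) * Z"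
    by (simp add: field_simps add_divide_distrib)
  finally show ?thesis unfolding W_def Z_def .
qed

end

definition stability_constant :: "real \<Rightarrow> real \<Rightarrow> real \<Rightarrow> real \<Rightarrow> real \<Rightarrow> real \<Rightarrow> real" where
  "stability_constant lam m \<Lambda> K R T =
     exp (((lam * K * pi)^2 / m + 4 * R * \<Lambda> / m * lam * R / m) * T + 4 * R * \<Lambda> / m * R / (2 * m))
     * (1 + \<Lambda> / (2 * m^2) * (2 * lam * R * T + R))"

lemma stability_constant_ge_1:
  assumes "t \<in> {0..T}" "m > 0" "lam \<ge> 0" "\<Lambda> \<ge> 0" "R \<ge> 0"
  shows "1 \<le> stability_constant lam m \<Lambda> K R T"
proof -
  have "1 * 1 \<le> exp (((lam * K * pi)^2 / m + 4 * R * \<Lambda> / m * lam * R / m) * T + 4 * R * \<Lambda> / m * R / (2 * m))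
      * (1 + \<Lambda> / (2 * m^2) * (2 * lam * R * T + R))"
    using assms by (intro mult_mono) auto
  then show ?thesis unfolding stability_constant_def by simp
qed

lemma stability_constant_bound:
  assumes "t \<in> {0..T}" "m > 0" "lam \<ge> 0" "\<Lambda> \<ge> 0" "R \<ge> 0" "d \<ge> 0" "w \<ge> 0"
  shows "exp (((lam * K * pi)^2 / m + 4 * R * \<Lambda> / m * lam * R / m) * t + 4 * R * \<Lambda> / m * R / (2 * m))
           * (w + \<Lambda> * d / m / (2 * m) * (2 * lam * R * t + R))
         \<le> stability_constant lam m \<Lambda> K R T * (w + d)"
proof -
  define c where "c = \<Lambda> / (2 * m^2) * (2 * lam * R * T + R)"
  have "c \<ge> 0" using assms unfolding c_def by auto
  have "2 * lam * R * t + R \<le> 2 * lam * R * T + R"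
    using assms by (simp add: mult_left_mono)
  then have "d * (\<Lambda> / (2 * m^2) * (2 * lam * R * t + R)) \<le> d * c"
    unfolding c_def using assms by (intro mult_left_mono) auto
  moreover have "\<Lambda> * d / m / (2 * m) * (2 * lam * R * t + R) = d * (\<Lambda> / (2 * m^2) * (2 * lam * R * t + R))"
    by (simp add: power2_eq_square mult_ac)
  ultimately have d_term: "\<Lambda> * d / m / (2 * m) * (2 * lam * R * t + R) \<le> d * c"
    by simp
  have "0 \<le> c * w" using \<open>c \<ge> 0\<close> \<open>w \<ge> 0\<close> by simp
  with d_term \<open>d \<ge> 0\<close> have "w + \<Lambda> * d / m / (2 * m) * (2 * lam * R * t + R) \<le> (1 + c) * (w + d)"
    by (simp add: algebra_simps)
  then have le: "w + \<Lambda> * d / m / (2 * m) * (2 * lam * R * t + R)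
      \<le> (1 + \<Lambda> / (2 * m^2) * (2 * lam * R * T + R)) * (w + d)"
    unfolding c_def .
  have "((lam * K * pi)^2 / m + 4 * R * \<Lambda> / m * lam * R / m) * t
      \<le> ((lam * K * pi)^2 / m + 4 * R * \<Lambda> / m * lam * R / m) * T"
    using assms by (intro mult_left_mono) auto
  then have "exp (((lam * K * pi)^2 / m + 4 * R * \<Lambda> / m * lam * R / m) * t + 4 * R * \<Lambda> / m * R / (2 * m))
      \<le> exp (((lam * K * pi)^2 / m + 4 * R * \<Lambda> / m * lam * R / m) * T + 4 * R * \<Lambda> / m * R / (2 * m))"
    by simp
  from mult_mono[OF this le] show ?thesis
    using assms unfolding stability_constant_def mult.assoc
    by (auto intro!: add_nonneg_nonneg mult_nonneg_nonneg divide_nonneg_pos)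
qed

context solution_pair
begin

lemma tendsto_h10_dist_at_0: "((\<lambda>s. h10_dist (U s) (V s)) \<longlongrightarrow> h10_dist (U 0) (V 0)) (at_right 0)"
proof -
  have "\<bar>h10_dist (U s) (V s) - h10_dist (U 0) (V 0)\<bar> \<le> (h10_dist (U s) (U 0) + h10_dist (V s) (V 0)) * 1"
    if "s > 0" for s
  proof -
    have h: "h10 (U s)" "h10 (U 0)" "h10 (V s)" "h10 (V 0)"
      using U.h10 V.h10 that by auto
    show ?thesis
      using h10_dist_triangle[OF h(1,2,3)] h10_dist_triangle[OF h(2,4,3)]
        h10_dist_triangle[OF h(2,1,4)] h10_dist_triangle[OF h(1,3,4)]
        h10_dist_commute[of "V 0" "V s"] h10_dist_commute[of "U 0" "U s"]
      by (simp add: abs_le_iff)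
  qed
  moreover have lim: "((\<lambda>s. h10_dist (U s) (U 0) + h10_dist (V s) (V 0)) \<longlongrightarrow> 0) (at_right 0)"
    using tendsto_add[OF U.continuous_h10[of 0] V.continuous_h10[of 0]]
    by (auto intro: tendsto_within_subset)
  ultimately have "((\<lambda>s. h10_dist (U s) (V s) - h10_dist (U 0) (V 0)) \<longlongrightarrow> 0) (at_right 0)"
    by (intro tendsto_0_le[OF lim, where K=1] eventually_mono[OF eventually_at_right_less])
       (auto simp: h10_dist_nonneg)
  then show ?thesis by (simp add: LIM_zero_iff)
qed

lemma dist_sq_le_Gronwall:
  assumes "0 < e" "e \<le> t"
    and R: "\<And>s. s \<in> {e..t} \<Longrightarrow> h10_sq (U s) \<le> R \<and> h10_sq (V s) \<le> R"
    and coeff: "\<And>r1 r2. r1 \<in> {0..R} \<Longrightarrow> r2 \<in> {0..R} \<Longrightarrow> (A1 r1 - A2 r2)^2 \<le> \<Lambda> * (d + (r1 - r2)^2)"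
    and lip: "K-lipschitz_on {- sqrt (pi * R)..sqrt (pi * R)} f" and "\<Lambda> \<ge> 0" "d \<ge> 0"
  shows "(h10_dist (U t) (V t))^2 \<le>
           exp (((lam * K * pi)^2 / m + 4 * R * \<Lambda> / m * lam * R / m) * t + 4 * R * \<Lambda> / m * R / (2 * m))
           * ((h10_dist (U e) (V e))^2 + \<Lambda> * d / m / (2 * m) * (2 * lam * R * t + R))"
proof -
  have "(h10_dist (U t) (V t))^2 \<le>
      exp (((lam * K * pi)^2 / m + 4 * R * \<Lambda> / m * (2 * lam) * R / (2 * m)) * t + 4 * R * \<Lambda> / m * R / (2 * m))
      * ((h10_dist (U e) (V e))^2 + \<Lambda> * d / m / (2 * m) * (2 * lam * R * t + R))"
  proof (rule Gronwall_coupled[where X="\<lambda>s. h10_sq (V s)" and Z="\<lambda>s. integral {0..pi} (\<lambda>x. (Vxx s x)^2)"])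
    fix s assume s: "s \<in> {e..t}"
    with \<open>0 < e\<close> have "s > 0" by simp
    show "((\<lambda>s. (h10_dist (U s) (V s))^2) has_real_derivative
        -2 * integral {0..pi} (\<lambda>x. (Ut s x - Vt s x) * (Uxx s x - Vxx s x))) (at s)"
      using \<open>s > 0\<close> by (rule has_real_derivative_dist_sq)
    show "((\<lambda>s. h10_sq (V s)) has_real_derivative -2 * integral {0..pi} (\<lambda>x. Vt s x * Vxx s x)) (at s)"
      using \<open>s > 0\<close> by (rule V.has_real_derivative_h10_sq)
    show "-2 * integral {0..pi} (\<lambda>x. (Ut s x - Vt s x) * (Uxx s x - Vxx s x))
        \<le> (lam * K * pi)^2 / m * (h10_dist (U s) (V s))^2
          + (4 * R * \<Lambda> / m * (h10_dist (U s) (V s))^2 + \<Lambda> * d / m) * integral {0..pi} (\<lambda>x. (Vxx s x)^2)"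
      using R[OF s] by (intro dist_sq_derivative_le[OF \<open>s > 0\<close> _ _ coeff lip \<open>\<Lambda> \<ge> 0\<close>]) auto
    show "-2 * integral {0..pi} (\<lambda>x. Vt s x * Vxx s x)
        \<le> - (2 * m) * integral {0..pi} (\<lambda>x. (Vxx s x)^2) + 2 * lam * h10_sq (V s)"
      using V.h10_sq_derivative_le[OF \<open>s > 0\<close>] by simp
    show "0 \<le> (h10_dist (U s) (V s))^2 \<and> 0 \<le> integral {0..pi} (\<lambda>x. (Vxx s x)^2)
        \<and> 0 \<le> h10_sq (V s) \<and> h10_sq (V s) \<le> R"
      using R[OF s] by (simp add: integral_square_nonneg h10_sq_nonneg)
  qed (use \<open>0 < e\<close> \<open>e \<le> t\<close> \<open>\<Lambda> \<ge> 0\<close> \<open>d \<ge> 0\<close> U.m_pos U.lam_nonneg R[of t] h10_sq_nonneg[of "V t"] in auto)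
  then show ?thesis by (simp add: mult_ac)
qed

lemma dist_sq_le:
  assumes "t \<in> {0..T}"
    and R: "\<And>s. s \<in> {0..T} \<Longrightarrow> h10_sq (U s) \<le> R \<and> h10_sq (V s) \<le> R"
    and coeff: "\<And>r1 r2. r1 \<in> {0..R} \<Longrightarrow> r2 \<in> {0..R} \<Longrightarrow> (A1 r1 - A2 r2)^2 \<le> \<Lambda> * (d + (r1 - r2)^2)"
    and lip: "K-lipschitz_on {- sqrt (pi * R)..sqrt (pi * R)} f" and "\<Lambda> \<ge> 0" "d \<ge> 0"
  shows "(h10_dist (U t) (V t))^2 \<le> stability_constant lam m \<Lambda> K R T * ((h10_dist (U 0) (V 0))^2 + d)"
proof -
  define W where "W s = (h10_dist (U s) (V s))^2" for s
  define C where "C = stability_constant lam m \<Lambda> K R T"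
  have "R \<ge> 0"
    using R[of 0] h10_sq_nonneg[of "U 0"] \<open>t \<in> {0..T}\<close> by auto
  have step: "W t \<le> C * (W e + d)" if "0 < e" "e \<le> t" for e
    using dist_sq_le_Gronwall[OF that _ coeff lip \<open>\<Lambda> \<ge> 0\<close> \<open>d \<ge> 0\<close>] R that \<open>t \<in> {0..T}\<close>
      stability_constant_bound[OF \<open>t \<in> {0..T}\<close> U.m_pos U.lam_nonneg \<open>\<Lambda> \<ge> 0\<close> \<open>R \<ge> 0\<close> \<open>d \<ge> 0\<close>, of "W e" K]
    unfolding W_def C_def by (auto intro: order_trans)
  show ?thesis
  proof (cases "t = 0")
    case True
    then show ?thesis
      using stability_constant_ge_1[OF \<open>t \<in> {0..T}\<close> U.m_pos U.lam_nonneg \<open>\<Lambda> \<ge> 0\<close> \<open>R \<ge> 0\<close>, of K]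
        mult_right_mono[of 1 "stability_constant lam m \<Lambda> K R T" "W 0 + d"] \<open>d \<ge> 0\<close>
      unfolding W_def by simp
  next
    case False
    with \<open>t \<in> {0..T}\<close> have "t > 0" by simp
    have "((\<lambda>e. C * (W e + d)) \<longlongrightarrow> C * (W 0 + d)) (at_right 0)"
      unfolding W_def by (intro tendsto_intros tendsto_h10_dist_at_0)
    moreover have "\<forall>\<^sub>F e in at_right 0. W t \<le> C * (W e + d)"
      unfolding eventually_at_right[OF \<open>t > 0\<close>] using step \<open>t > 0\<close> by (intro exI[of _ t]) auto
    ultimately show ?thesis
      unfolding C_def W_def by (intro tendsto_lowerbound[of _ _ "at_right 0"]) auto
  qed
qed

end

lemma (in dissipative_nonlinearity) interpolated_solutions_dist_sq_le:
  fixes a :: "real \<Rightarrow> real" and lam T R0 :: real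
  defines "R \<equiv> exp (2 * lam * T) * R0"
  assumes lip: "L-lipschitz_on {0..} a" and a_ge: "\<And>s. s \<ge> 0 \<Longrightarrow> m \<le> a s" and "m > 0" "lam \<ge> 0"
    and "P \<ge> 0" "\<tau>1 \<in> {0..1}" "\<tau>2 \<in> {0..1}"
    and u: "is_solution (\<lambda>r. a (\<tau>1 * r + (1 - \<tau>1) * P)) lam f u0 u"
    and v: "is_solution (\<lambda>r. a (\<tau>2 * r + (1 - \<tau>2) * P)) lam f v0 v"
    and "h10_sq u0 \<le> R0" "h10_sq v0 \<le> R0"
    and lip_f: "K-lipschitz_on {- sqrt (pi * R)..sqrt (pi * R)} f" and "t \<in> {0..T}"
  shows "(h10_dist (u t) (v t))^2
           \<le> stability_constant lam m (2 * L^2 * ((R + P)^2 + 1)) K R T * ((h10_dist u0 v0)^2 + (\<tau>1 - \<tau>2)^2)"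
proof -
  obtain ut ux uxx vt vx vxx where
    "classical_solution u ut ux uxx (\<lambda>r. a (\<tau>1 * r + (1 - \<tau>1) * P)) lam f"
    "classical_solution v vt vx vxx (\<lambda>r. a (\<tau>2 * r + (1 - \<tau>2) * P)) lam f"
    using is_solution_imp_classical_solution[OF u] is_solution_imp_classical_solution[OF v] by metis
  moreover have "m \<le> a (\<tau> * r + (1 - \<tau>) * P)" if "\<tau> \<in> {0..1}" "r \<ge> 0" for \<tau> r
    using that \<open>P \<ge> 0\<close> by (intro a_ge) auto
  ultimately interpret solution_pair u ut ux uxx "\<lambda>r. a (\<tau>1 * r + (1 - \<tau>1) * P)"
      v vt vx vxx "\<lambda>r. a (\<tau>2 * r + (1 - \<tau>2) * P)" lam f f' m
    using \<open>m > 0\<close> \<open>lam \<ge> 0\<close> \<open>\<tau>1 \<in> {0..1}\<close> \<open>\<tau>2 \<in> {0..1}\<close>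
    by (intro solution_pair.intro dissipative_solution.intro dissipative_solution_axioms.intro
        dissipative_nonlinearity_axioms) auto
  have initial: "h10_sq (u 0) = h10_sq u0" "h10_sq (v 0) = h10_sq v0" "h10_dist (u 0) (v 0) = h10_dist u0 v0"
    unfolding h10_sq_def h10_dist_def is_solution_initial_h10_deriv[OF u] is_solution_initial_h10_deriv[OF v]
    by simp_all
  have "h10_sq (u s) \<le> R \<and> h10_sq (v s) \<le> R" if "s \<in> {0..T}" for s
    using U.h10_sq_le_exp_bound V.h10_sq_le_exp_bound that initial assms unfolding R_def by auto
  moreover have "(a (\<tau>1 * r1 + (1 - \<tau>1) * P) - a (\<tau>2 * r2 + (1 - \<tau>2) * P))^2
      \<le> 2 * L^2 * ((R + P)^2 + 1) * ((\<tau>1 - \<tau>2)^2 + (r1 - r2)^2)" if "r1 \<in> {0..R}" "r2 \<in> {0..R}" for r1 r2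
    using that assms by (intro interpolated_coefficient_diff_sq_le) auto
  ultimately show ?thesis
    using dist_sq_le[OF \<open>t \<in> {0..T}\<close> _ _ lip_f, of "2 * L^2 * ((R + P)^2 + 1)" "(\<tau>1 - \<tau>2)^2"]
    unfolding initial by auto
qed

lemma h10_sq_bounded_if_tendsto:
  assumes "(\<lambda>n. h10_dist (u n) v) \<longlonglongrightarrow> 0" "\<And>n. h10 (u n)" "h10 v"
  obtains R0 where "\<And>n. h10_sq (u n) \<le> R0" "h10_sq v \<le> R0"
proof -
  obtain B where B: "\<And>n. h10_dist (u n) v \<le> B"
    using convergent_imp_Bseq[OF convergentI[OF assms(1)]] unfolding Bseq_def
    by (auto dest: abs_le_D1)
  have "0 \<le> B" using B[of 0] h10_dist_nonneg[of "u 0" v] by linarith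
  show ?thesis
  proof (rule that)
    fix n
    have "h10_sq (u n) \<le> (sqrt (h10_sq v) + h10_dist (u n) v)^2"
      using h10_sq_le_dist[OF assms(2,3)] .
    also have "\<dots> \<le> (sqrt (h10_sq v) + B)^2"
      using B[of n] by (intro power_mono) (auto simp: h10_dist_nonneg h10_sq_nonneg add_nonneg_nonneg)
    finally show "h10_sq (u n) \<le> (sqrt (h10_sq v) + B)^2" .
    show "h10_sq v \<le> (sqrt (h10_sq v) + B)^2"
      using power_mono[of "sqrt (h10_sq v)" "sqrt (h10_sq v) + B" 2] \<open>0 \<le> B\<close>
      by (simp add: h10_sq_nonneg)
  qed
qed

lemma tendsto_h10_dist_if_dist_sq_le:
  fixes x :: "nat \<Rightarrow> real \<Rightarrow> real \<Rightarrow> real" and v :: "real \<Rightarrow> real \<Rightarrow> real"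
  assumes bound: "\<And>n s. s \<in> {0..T} \<Longrightarrow> (h10_dist (x n s) (v s))^2 \<le> C * ((d n)^2 + (e n)^2)"
    and "d \<longlonglongrightarrow> 0" "e \<longlonglongrightarrow> 0" and v: "is_solution A lam f v0 v" and x: "\<And>n. h10 (x n (t n))"
    and "t \<longlonglongrightarrow> t0" "\<And>n. t n \<ge> 0" "t0 \<in> {0..<T}"
  shows "(\<lambda>n. h10_dist (x n (t n)) (v t0)) \<longlonglongrightarrow> 0"
proof (rule tendsto_sandwich[of "\<lambda>n. 0" _ _ "\<lambda>n. sqrt (C * ((d n)^2 + (e n)^2)) + h10_dist (v (t n)) (v t0)"])
  have "continuous (at t0 within {0..}) (\<lambda>s. h10_dist (v s) (v t0))"
    using is_solution_continuous[OF v] \<open>t0 \<in> {0..<T}\<close> unfolding continuous_within h10_dist_self by simp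
  then have "(\<lambda>n. h10_dist (v (t n)) (v t0)) \<longlonglongrightarrow> 0"
    using \<open>t \<longlonglongrightarrow> t0\<close> \<open>\<And>n. t n \<ge> 0\<close>
    unfolding continuous_within_sequentially by (force simp: comp_def h10_dist_self)
  moreover have "(\<lambda>n. sqrt (C * ((d n)^2 + (e n)^2))) \<longlonglongrightarrow> sqrt (C * (0^2 + 0^2))"
    by (intro tendsto_intros \<open>d \<longlonglongrightarrow> 0\<close> \<open>e \<longlonglongrightarrow> 0\<close>)
  ultimately show "(\<lambda>n. sqrt (C * ((d n)^2 + (e n)^2)) + h10_dist (v (t n)) (v t0)) \<longlonglongrightarrow> 0"
    using tendsto_add by fastforce
  have "\<forall>\<^sub>F n in sequentially. t n < T"
    using \<open>t \<longlonglongrightarrow> t0\<close> \<open>t0 \<in> {0..<T}\<close> by (intro order_tendstoD) auto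
  then show "\<forall>\<^sub>F n in sequentially.
      h10_dist (x n (t n)) (v t0) \<le> sqrt (C * ((d n)^2 + (e n)^2)) + h10_dist (v (t n)) (v t0)"
  proof eventually_elim
    case (elim n)
    have "h10_dist (x n (t n)) (v t0) \<le> h10_dist (x n (t n)) (v (t n)) + h10_dist (v (t n)) (v t0)"
      using h10_dist_triangle x is_solution_h10[OF v] \<open>\<And>n. t n \<ge> 0\<close> \<open>t0 \<in> {0..<T}\<close> by simp
    moreover have "h10_dist (x n (t n)) (v (t n)) \<le> sqrt (C * ((d n)^2 + (e n)^2))"
      using bound[of "t n" n] elim \<open>\<And>n. t n \<ge> 0\<close> by (intro real_le_rsqrt) auto
    ultimately show ?case by linarith
  qed
qed (auto simp: h10_dist_nonneg)

theorem lemma3p2: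
  fixes a f :: "real \<Rightarrow> real" and lam m M :: real and N :: nat
    and phi :: "real \<Rightarrow> real"
    and S :: "real \<Rightarrow> real \<Rightarrow> (real \<Rightarrow> real) \<Rightarrow> (real \<Rightarrow> real)"
    and \<tau> :: "nat \<Rightarrow> real" and \<tau>0 :: real
    and u0s :: "nat \<Rightarrow> real \<Rightarrow> real" and u0 :: "real \<Rightarrow> real"
    and t :: "nat \<Rightarrow> real" and t0 :: real
  assumes lam_pos: "lam > 0"
    and a_C1: "\<exists>a'. (\<forall>s\<ge>0. (a has_real_derivative a' s) (at s within {0..})) \<and> continuous_on {0..} a'"
    and a_mono: "mono_on {0..} a"
    and a_lip: "\<exists>L. \<forall>s\<ge>0. \<forall>r\<ge>0. \<bar>a s - a r\<bar> \<le> L * \<bar>s - r\<bar>"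
    and m_pos: "0 < m" and a_bounds: "\<forall>s\<ge>0. m \<le> a s \<and> a s \<le> M"
    and f_C2: "\<exists>f' f''. (\<forall>s. (f has_real_derivative f' s) (at s)) \<and>
                       (\<forall>s. (f' has_real_derivative f'' s) (at s)) \<and> continuous_on UNIV f'' \<and>
                       f' 0 = 1 \<and> (\<forall>s. s \<noteq> 0 \<longrightarrow> s * f'' s < 0)"
    and f_odd: "\<forall>s. f (- s) = - f s" and f0: "f 0 = 0"
    and f_limsup: "Limsup at_infinity (\<lambda>s. ereal (f s / s)) \<le> 0"
    and N_pos: "N \<ge> 1"
    and N_low: "a 0 * (real N)^2 < lam" and N_up: "lam < a 0 * (real N + 1)^2"
    and phi_eq: "is_equilibrium a lam f phi"
    and phi_zeros: "card {x\<in>{0..pi}. phi x = 0} = N + 1"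
    and S_sol: "\<forall>s\<in>{0..1}. \<forall>v. h10 v \<longrightarrow>
        is_solution (\<lambda>r. a (s * r + (1 - s) * h10_sq phi)) lam f v (\<lambda>r. S s r v)"
    and tau_range: "\<forall>n. \<tau> n \<in> {0..1}" and tau0_range: "\<tau>0 \<in> {0..1}"
    and tau_lim: "\<tau> \<longlonglongrightarrow> \<tau>0"
    and u0s_h10: "\<forall>n. h10 (u0s n)" and u0_h10: "h10 u0"
    and u0_lim: "(\<lambda>n. h10_dist (u0s n) u0) \<longlonglongrightarrow> 0"
    and t_nonneg: "\<forall>n. t n \<ge> 0" and t0_nonneg: "t0 \<ge> 0"
    and t_lim: "t \<longlonglongrightarrow> t0"
  shows "(\<lambda>n. h10_dist (S (\<tau> n) (t n) (u0s n)) (S \<tau>0 t0 u0)) \<longlonglongrightarrow> 0"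
proof -
  obtain f' f'' where "\<And>s. (f has_real_derivative f' s) (at s)" "\<And>s. (f' has_real_derivative f'' s) (at s)"
    "f' 0 = 1" "\<And>s. s \<noteq> 0 \<Longrightarrow> s * f'' s < 0"
    using f_C2 by blast
  then interpret dissipative_nonlinearity f f'
    using f0 by (rule dissipative_nonlinearity_if_sign_condition)
  obtain L where "\<forall>s\<ge>0. \<forall>r\<ge>0. \<bar>a s - a r\<bar> \<le> L * \<bar>s - r\<bar>"
    using a_lip by blast
  then have L: "(max L 0)-lipschitz_on {0..} a"
    by (intro lipschitz_on_max_0) auto
  obtain R0 where R0: "\<And>n. h10_sq (u0s n) \<le> R0" "h10_sq u0 \<le> R0"
    using h10_sq_bounded_if_tendsto[OF u0_lim] u0s_h10 u0_h10 by blast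
  define R where "R = exp (2 * lam * (t0 + 1)) * R0"
  obtain K where K: "K-lipschitz_on {- sqrt (pi * R)..sqrt (pi * R)} f"
    using lipschitz_on_interval_if_C1[OF f_deriv continuous_f'] by blast
  have sol: "\<And>n. is_solution (\<lambda>r. a (\<tau> n * r + (1 - \<tau> n) * h10_sq phi)) lam f (u0s n) (\<lambda>r. S (\<tau> n) r (u0s n))"
    "is_solution (\<lambda>r. a (\<tau>0 * r + (1 - \<tau>0) * h10_sq phi)) lam f u0 (\<lambda>r. S \<tau>0 r u0)"
    using S_sol tau_range tau0_range u0s_h10 u0_h10 by blast+
  show ?thesis
  proof (rule tendsto_h10_dist_if_dist_sq_le[where x="\<lambda>n s. S (\<tau> n) s (u0s n)",
        OF _ u0_lim LIM_zero[OF tau_lim] sol(2) _ t_lim])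
    show "(h10_dist (S (\<tau> n) s (u0s n)) (S \<tau>0 s u0))^2 \<le> stability_constant lam m
        (2 * (max L 0)^2 * ((R + h10_sq phi)^2 + 1)) K R (t0 + 1) * ((h10_dist (u0s n) u0)^2 + (\<tau> n - \<tau>0)^2)"
      if "s \<in> {0..t0 + 1}" for n s
      using interpolated_solutions_dist_sq_le[OF L _ m_pos _ h10_sq_nonneg tau_range[rule_format] tau0_range
          sol R0 K[unfolded R_def] that] a_bounds lam_pos unfolding R_def by auto
    show "h10 (S (\<tau> n) (t n) (u0s n))" for n
      using is_solution_h10[OF sol(1)] t_nonneg by blast
  qed (use t_nonneg t0_nonneg in auto)
qed

end
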